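(* The function $Z^{\rm FD}_{\rm D}(\mathbf c)=-C^*(\mathbf c)+\sum_{d\in\mathcal D}\boldsymbol\mu^d(\mathbf c)\cdot\tilde{\mathbf q}^d$ is smooth and concave with respect to $\mathbf c$, and its gradient is $$\nabla_{\mathbf c}Z^{\rm FD}_{\rm D}(\mathbf c)=\mathbf X(\mathbf c)-\mathbf c^{-1}(\mathbf c),$$ where $\mathbf X(\mathbf t)\equiv\sum_{d\in\mathcal D}\mathbf x^d(\mathbf t)$ is the total link flow pattern obtained from the NGEV assignment with fixed link cost pattern $\mathbf t$.
   Context: $\mathcal G=(\mathcal N,\mathcal L)$ is a directed graph with successor sets $\mathcal F(i)$ and predecessor sets $\mathcal B(i)$; $\mathcal O,\mathcal D\subseteq\mathcal N$ origins and destinations. For each destination $d$: demands $q^d_i\ge0$; $\tilde q^d_i=q^d_i$ ($i\ne d$), $\tilde q^d_d=-\sum_{o\in\mathcal O}q^d_o$; scale parameters $\theta^d_i>0$; allocation parameters $\alpha^d_{ji}\ge0$ with $\sum_{i\in\mathcal B(j)}\alpha^d_{ji}=1$. For a link cost vector $\mathbf c$, $\boldsymbol\mu^d(\mathbf c)$ solves $1=\sum_{j\in\mathcal F(i)}\alpha^d_{ji}e^{-\theta^d_i(c_{ij}+\mu^d_j-\mu^d_i)}$ for all $i\in\mathcal N$. The NGEV assignment with cost $\mathbf t$ produces flows $\mathbf x^d(\mathbf t)$ via: $p^d_{ij|i}=\frac{\alpha^d_{ji}e^{-\theta^d_i(t_{ij}+\mu^d_j)}}{\sum_{j'\in\mathcal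 F(i)}\alpha^d_{j'i}e^{-\theta^d_i(t_{ij'}+\mu^d_{j'})}}$, $x^d_{ij}=p^d_{ij|i}z^d_i$, $z^d_i=q^d_i+\sum_{h\in\mathcal B(i)}x^d_{hi}$, with $\boldsymbol\mu^d=\boldsymbol\mu^d(\mathbf t)$. The link cost map $\mathbf c(\mathbf X):\mathbb R_+^{|\mathcal L|}\to\mathbb R_+^{|\mathcal L|}$ is continuous, single-valued, with symmetric Jacobian and strictly monotone; $\mathbf c^{-1}$ is its inverse; $C(\mathbf X)=\oint_{\mathbf X}\mathbf c(\mathbf X)\,\mathrm d\mathbf X$ and $C^*(\mathbf c)=\max_{\mathbf X}[\mathbf c\cdot\mathbf X-C(\mathbf X)]=\oint_{\mathbf c}\mathbf c^{-1}(\mathbf c)\,\mathrm d\mathbf c$ is its conjugate. *)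

theory Defs
  imports "HOL-Analysis.Analysis"
begin

text \<open>
Network: nodes form a finite type 'n, links form a finite type 'l; each link l
goes from node src l (tail) to node tgt l (head).  Destination-specific data (alpha, theta, q) are passed
already specialised to one destination d unless indicated otherwise.
\<close>

definition nonneg_orthant :: "(real ^ 'l) set" where
  "nonneg_orthant = {X. \<forall>l. 0 \<le> X $ l}"

definition mu_eqs ::
  "('l \<Rightarrow> 'n) \<Rightarrow> ('l \<Rightarrow> 'n) \<Rightarrow> ('l \<Rightarrow> real) \<Rightarrow> ('n \<Rightarrow> real) \<Rightarrow> 'n
   \<Rightarrow> real ^ 'l \<Rightarrow> ('n \<Rightarrow> real) \<Rightarrow> bool" where
  "mu_eqs src tgt alpha theta d c mu \<longleftrightarrow>
     mu d = 0 \<and>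
     (\<forall>i. i \<noteq> d \<longrightarrow>
        (\<Sum>l\<in>{l. src l = i}. alpha l * exp (- theta i * (c $ l + mu (tgt l) - mu i))) = 1)"

definition mu_of ::
  "('l \<Rightarrow> 'n) \<Rightarrow> ('l \<Rightarrow> 'n) \<Rightarrow> ('l \<Rightarrow> real) \<Rightarrow> ('n \<Rightarrow> real) \<Rightarrow> 'n
   \<Rightarrow> real ^ 'l \<Rightarrow> 'n \<Rightarrow> real" where
  "mu_of src tgt alpha theta d c = (THE mu. mu_eqs src tgt alpha theta d c mu)"

definition ngev_prob ::
  "('l \<Rightarrow> 'n) \<Rightarrow> ('l \<Rightarrow> 'n) \<Rightarrow> ('l \<Rightarrow> real) \<Rightarrow> ('n \<Rightarrow> real) \<Rightarrow> ('n \<Rightarrow> real)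
   \<Rightarrow> real ^ 'l \<Rightarrow> 'l \<Rightarrow> real" where
  "ngev_prob src tgt alpha theta mu t l =
     alpha l * exp (- theta (src l) * (t $ l + mu (tgt l))) /
     (\<Sum>l'\<in>{l'. src l' = src l}. alpha l' * exp (- theta (src l) * (t $ l' + mu (tgt l'))))"

definition flow_eqs ::
  "('l \<Rightarrow> 'n) \<Rightarrow> ('l \<Rightarrow> 'n) \<Rightarrow> ('l \<Rightarrow> real) \<Rightarrow> 'n \<Rightarrow> ('n \<Rightarrow> real)
   \<Rightarrow> real ^ 'l \<Rightarrow> bool" where
  "flow_eqs src tgt p d q x \<longleftrightarrow>
     (\<forall>l. x $ l = (if src l = d then 0
                  else p l * (q (src l) + (\<Sum>h\<in>{h. tgt h = src l}. x $ h))))"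

definition ngev_flow ::
  "('l \<Rightarrow> 'n) \<Rightarrow> ('l \<Rightarrow> 'n) \<Rightarrow> ('l \<Rightarrow> real) \<Rightarrow> ('n \<Rightarrow> real) \<Rightarrow> 'n \<Rightarrow> ('n \<Rightarrow> real)
   \<Rightarrow> real ^ 'l \<Rightarrow> real ^ 'l" where
  "ngev_flow src tgt alpha theta d q t =
     (THE x. flow_eqs src tgt (ngev_prob src tgt alpha theta (mu_of src tgt alpha theta d t) t) d q x)"

definition total_flow ::
  "('l \<Rightarrow> 'n) \<Rightarrow> ('l \<Rightarrow> 'n) \<Rightarrow> ('n \<Rightarrow> 'l \<Rightarrow> real) \<Rightarrow> ('n \<Rightarrow> 'n \<Rightarrow> real) \<Rightarrow> 'n set
   \<Rightarrow> ('n \<Rightarrow> 'n \<Rightarrow> real) \<Rightarrow> real ^ 'l \<Rightarrow> real ^ 'l" where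
  "total_flow src tgt alpha theta D q t =
     (\<Sum>d\<in>D. ngev_flow src tgt (alpha d) (theta d) d (q d) t)"

definition qtilde :: "'n set \<Rightarrow> ('n \<Rightarrow> real) \<Rightarrow> 'n \<Rightarrow> 'n \<Rightarrow> real" where
  "qtilde Orig q d i = (if i = d then - (\<Sum>r\<in>Orig. q r) else q i)"

text \<open>Potential C(X) = line integral of c from 0 to X (path independent since the
Jacobian is symmetric), its conjugate C*, and the inverse cost map.\<close>
definition Cpot :: "(real ^ 'l \<Rightarrow> real ^ 'l) \<Rightarrow> real ^ 'l \<Rightarrow> real" where
  "Cpot cm X = integral {0..1} (\<lambda>s. cm (s *\<^sub>R X) \<bullet> X)"

definition Cstar :: "(real ^ 'l \<Rightarrow> real ^ 'l) \<Rightarrow> real ^ 'l \<Rightarrow> real" where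
  "Cstar cm c = (SUP X\<in>nonneg_orthant. c \<bullet> X - Cpot cm X)"

definition cinv :: "(real ^ 'l \<Rightarrow> real ^ 'l) \<Rightarrow> real ^ 'l \<Rightarrow> real ^ 'l" where
  "cinv cm = the_inv_into nonneg_orthant cm"

definition Z_FD_D ::
  "('l \<Rightarrow> 'n) \<Rightarrow> ('l \<Rightarrow> 'n) \<Rightarrow> ('n \<Rightarrow> 'l \<Rightarrow> real) \<Rightarrow> ('n \<Rightarrow> 'n \<Rightarrow> real) \<Rightarrow> 'n set
   \<Rightarrow> 'n set \<Rightarrow> ('n \<Rightarrow> 'n \<Rightarrow> real) \<Rightarrow> (real ^ 'l \<Rightarrow> real ^ 'l) \<Rightarrow> real ^ 'l \<Rightarrow> real" where
  "Z_FD_D src tgt alpha theta Orig D q cm c =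
     - Cstar cm c +
     (\<Sum>d\<in>D. \<Sum>i\<in>UNIV. mu_of src tgt (alpha d) (theta d) d c i * qtilde Orig (q d) d i)"

end

theory Submission
  imports Defs
begin

text \<open>
  Because the Jacobian of \<open>c\<close> is symmetric, its line integrals are path independent (Goursat's
  subdivision argument on triangles). So \<open>C\<close> is a potential of the monotone map \<open>c\<close>, hence
  convex, and the supremum defining \<open>C*(c(X))\<close> is attained at \<open>X\<close>. Thus \<open>c\<^sup>-\<^sup>1\<close> is a
  subgradient of \<open>C*\<close>, which makes \<open>C*\<close> convex; the subgradient is locally bounded, hence
  continuous (\<open>c\<close> restricted to a compact set has a continuous inverse), so \<open>C*\<close> is
  differentiable with gradient \<open>c\<^sup>-\<^sup>1\<close>.

  Each \<open>\<mu>\<^sup>d\<close> is concave in the costs: the convex combination of two solutions is a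
  subsolution of the log-sum-exp equations (convexity of \<open>exp\<close>), and subsolutions lie below
  the solution by monotone iteration of the Bellman operator. Concave functions are locally
  Lipschitz, and a second-order expansion of \<open>exp\<close> shows that
  \<open>\<mu>\<^sup>d(c') \<cdot> q\<^sup>d - \<mu>\<^sup>d(c) \<cdot> q\<^sup>d - x\<^sup>d(c) \<cdot> (c' - c)\<close> is \<open>O(|c' - c|\<^sup>2)\<close>, the linear terms
  cancelling by flow conservation. Finally, the gradient of a differentiable concave function
  is continuous.
\<close>

section \<open>Segment integrals and path independence\<close>

definition segment_integral :: "('a::euclidean_space \<Rightarrow> 'a) \<Rightarrow> 'a \<Rightarrow> 'a \<Rightarrow> real" where
  "segment_integral F A B = integral {0..1} (\<lambda>s. F (A + s *\<^sub>R (B - A)) \<bullet> (B - A))"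

lemma segment_point_in_convex:
  assumes "convex S" "A \<in> S" "B \<in> S" "0 \<le> s" "s \<le> 1"
  shows "A + s *\<^sub>R (B - A) \<in> S"
proof -
  have "A + s *\<^sub>R (B - A) = (1 - s) *\<^sub>R A + s *\<^sub>R B" by (simp add: algebra_simps)
  then show ?thesis using assms by (metis convex_alt)
qed

lemma continuous_on_segment_integrand:
  assumes "convex S" "continuous_on S F" "A \<in> S" "B \<in> S" "0 \<le> a" "b \<le> 1"
  shows "continuous_on {a..b} (\<lambda>s. F (A + s *\<^sub>R (B - A)) \<bullet> (B - A))"
proof -
  have "(\<lambda>s. A + s *\<^sub>R (B - A)) ` {a..b} \<subseteq> S"
    using segment_point_in_convex[OF assms(1,3,4)] assms(5,6) by auto
  then have "continuous_on {a..b} (F \<circ> (\<lambda>s. A + s *\<^sub>R (B - A)))"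
    by (intro continuous_on_compose continuous_intros continuous_on_subset[OF assms(2)])
  then show ?thesis by (intro continuous_intros) (simp add: o_def)
qed

lemma segment_integrand_has_integral:
  assumes "convex S" "continuous_on S F" "A \<in> S" "B \<in> S"
  shows "((\<lambda>s. F (A + s *\<^sub>R (B - A)) \<bullet> (B - A)) has_integral segment_integral F A B) {0..1}"
  unfolding segment_integral_def
  using continuous_on_segment_integrand[OF assms, of 0 1]
  by (intro integrable_integral integrable_continuous_real) simp

lemma segment_integral_subsegment:
  assumes "convex S" "continuous_on S F" "A \<in> S" "B \<in> S" "0 \<le> a" "a \<le> b" "b \<le> 1"
  shows "segment_integral F (A + a *\<^sub>R (B - A)) (A + b *\<^sub>R (B - A))
       = integral {a..b} (\<lambda>s. F (A + s *\<^sub>R (B - A)) \<bullet> (B - A))"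
proof -
  let ?f = "\<lambda>s. F (A + s *\<^sub>R (B - A)) \<bullet> (B - A)"
  let ?g = "\<lambda>t. a + t * (b - a)"
  let ?P = "A + a *\<^sub>R (B - A)" and ?Q = "A + b *\<^sub>R (B - A)"
  have "((\<lambda>t. (b - a) *\<^sub>R ?f (?g t)) has_integral integral {?g 0..?g 1} ?f) {0..1}"
  proof (rule has_integral_substitution[of 0 1 ?g a b])
    show "?g ` {0..1} \<subseteq> {a..b}"
    proof
      fix y assume "y \<in> ?g ` {0..1}"
      then obtain t where t: "0 \<le> t" "t \<le> 1" "y = ?g t" by auto
      have "t * (b - a) \<le> 1 * (b - a)" using t assms by (intro mult_right_mono) auto
      then show "y \<in> {a..b}" using t assms by auto
    qed
    show "continuous_on {a..b} ?f" using continuous_on_segment_integrand assms by blast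
    show "\<And>x. x \<in> {0..1} \<Longrightarrow> (?g has_real_derivative (b - a)) (at x within {0..1})"
      by (auto intro!: derivative_eq_intros)
  qed (use assms in auto)
  moreover have "(b - a) *\<^sub>R ?f (?g t) = F (?P + t *\<^sub>R (?Q - ?P)) \<bullet> (?Q - ?P)" for t
  proof -
    have "A + ?g t *\<^sub>R (B - A) = ?P + t *\<^sub>R (?Q - ?P)" "?Q - ?P = (b - a) *\<^sub>R (B - A)"
      by (simp_all add: algebra_simps)
    then show ?thesis by (simp only: inner_scaleR_right real_scaleR_def)
  qed
  ultimately show ?thesis
    unfolding segment_integral_def[of F ?P] by (simp add: integral_unique)
qed

lemma segment_integral_split:
  assumes "convex S" "continuous_on S F" "A \<in> S" "B \<in> S" "0 \<le> t" "t \<le> 1"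
  shows "segment_integral F A B
       = segment_integral F A (A + t *\<^sub>R (B - A)) + segment_integral F (A + t *\<^sub>R (B - A)) B"
proof -
  let ?f = "\<lambda>s. F (A + s *\<^sub>R (B - A)) \<bullet> (B - A)"
  have "segment_integral F A (A + t *\<^sub>R (B - A)) = integral {0..t} ?f"
    using segment_integral_subsegment[OF assms(1-4), of 0 t] assms by simp
  moreover have "segment_integral F (A + t *\<^sub>R (B - A)) B = integral {t..1} ?f"
    using segment_integral_subsegment[OF assms(1-4), of t 1] assms by simp
  moreover have "integral {0..t} ?f + integral {t..1} ?f = integral {0..1} ?f"
    using segment_integrand_has_integral[OF assms(1-4)] assms
    by (intro Henstock_Kurzweil_Integration.integral_combine) auto
  ultimately show ?thesis unfolding segment_integral_def by simp
qed

lemma segment_integral_reverse: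
  assumes "convex S" "continuous_on S F" "A \<in> S" "B \<in> S"
  shows "segment_integral F B A = - segment_integral F A B"
proof -
  let ?f = "\<lambda>s. F (A + s *\<^sub>R (B - A)) \<bullet> (B - A)"
  have "((\<lambda>x. ?f (-x)) has_integral segment_integral F A B) {-1..-0}"
    by (rule iffD2[OF has_integral_reflect_real segment_integrand_has_integral[OF assms]])
  then have "((\<lambda>x. ?f (- (x + -1))) has_integral segment_integral F A B) {-1 - -1..-0 - -1}"
    by (rule has_integral_shift_real_ivl)
  then have "((\<lambda>x. - ?f (1 - x)) has_integral - segment_integral F A B) {0..1}"
    by (intro has_integral_neg) simp
  moreover have "- ?f (1 - x) = F (B + x *\<^sub>R (A - B)) \<bullet> (A - B)" for x
  proof -
    have "A + (1 - x) *\<^sub>R (B - A) = B + x *\<^sub>R (A - B)" by (simp add: algebra_simps)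
    then show ?thesis by (simp flip: inner_minus_right)
  qed
  ultimately show ?thesis unfolding segment_integral_def[of F B A] by (simp add: integral_unique)
qed

definition triangle_integral :: "('a::euclidean_space \<Rightarrow> 'a) \<Rightarrow> 'a \<Rightarrow> 'a \<Rightarrow> 'a \<Rightarrow> real" where
  "triangle_integral F A B C = segment_integral F A B + segment_integral F B C + segment_integral F C A"

definition triangle_perimeter :: "'a::euclidean_space \<Rightarrow> 'a \<Rightarrow> 'a \<Rightarrow> real" where
  "triangle_perimeter A B C = norm (B - A) + norm (C - B) + norm (A - C)"

text \<open>The segment integral of the affine field \<open>x \<mapsto> F0 + J (x - z)\<close>.\<close>

definition affine_segment_integral :: "'a::euclidean_space \<Rightarrow> ('a \<Rightarrow> 'a) \<Rightarrow> 'a \<Rightarrow> 'a \<Rightarrow> 'a \<Rightarrow> real" where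
  "affine_segment_integral F0 J z P Q = (F0 + J (P - z)) \<bullet> (Q - P) + (1/2) * (J (Q - P) \<bullet> (Q - P))"

lemma affine_segment_integral_potential:
  assumes "linear J" "\<forall>u v. J u \<bullet> v = u \<bullet> J v"
  shows "affine_segment_integral F0 J z P Q
       = F0 \<bullet> (Q - P) + (1/2) * (J (Q - z) \<bullet> (Q - z)) - (1/2) * (J (P - z) \<bullet> (P - z))"
proof -
  define a b where "a = P - z" and "b = Q - z"
  have QP: "Q - P = b - a" unfolding a_def b_def by simp
  have J_diff: "J (b - a) = J b - J a" using assms(1) by (simp add: linear_diff)
  have J_sym: "J b \<bullet> a = J a \<bullet> b" using assms(2) by (simp add: inner_commute)
  have "(F0 + J a) \<bullet> (b - a) + (1/2) * (J (b - a) \<bullet> (b - a))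
      = F0 \<bullet> (b - a) + (1/2) * (J b \<bullet> b) - (1/2) * (J a \<bullet> a)"
    unfolding J_diff by (simp add: inner_diff_left inner_diff_right inner_add_left J_sym algebra_simps)
  then show ?thesis unfolding affine_segment_integral_def QP a_def b_def .
qed

lemma affine_triangle_integral_eq_0:
  assumes "linear J" "\<forall>u v. J u \<bullet> v = u \<bullet> J v"
  shows "affine_segment_integral F0 J z A B + affine_segment_integral F0 J z B C
       + affine_segment_integral F0 J z C A = 0"
  unfolding affine_segment_integral_potential[OF assms] by (simp add: inner_diff_right algebra_simps)

lemma has_integral_affine_unit_interval:
  fixes \<alpha> \<beta> :: real
  shows "((\<lambda>s. \<alpha> + s * \<beta>) has_integral \<alpha> + \<beta> / 2) {0..1}"
proof -
  have "((\<lambda>s. \<alpha> + s * \<beta>) has_integral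
          (\<lambda>s. \<alpha> * s + \<beta> * s^2 / 2) 1 - (\<lambda>s. \<alpha> * s + \<beta> * s^2 / 2) 0) {0..1}"
    by (rule fundamental_theorem_of_calculus)
       (auto intro!: derivative_eq_intros simp flip: has_real_derivative_iff_has_vector_derivative)
  then show ?thesis by simp
qed

lemma segment_integral_affine_approx:
  assumes "convex S" "continuous_on S F" "A \<in> S" "B \<in> S" "bounded_linear J" "0 \<le> e"
    and close: "\<And>s. s \<in> {0..1} \<Longrightarrow>
      norm (F (A + s *\<^sub>R (B - A)) - (F0 + J (A + s *\<^sub>R (B - A) - z))) \<le> e"
  shows "\<bar>segment_integral F A B - affine_segment_integral F0 J z A B\<bar> \<le> e * norm (B - A)"
proof -
  interpret J: bounded_linear J by fact
  let ?g = "\<lambda>s. F (A + s *\<^sub>R (B - A)) \<bullet> (B - A)"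
  let ?h = "\<lambda>s. (F0 + J (A - z)) \<bullet> (B - A) + s * (J (B - A) \<bullet> (B - A))"
  have "(?h has_integral affine_segment_integral F0 J z A B) {0..1}"
    using has_integral_affine_unit_interval[of "(F0 + J (A - z)) \<bullet> (B - A)" "J (B - A) \<bullet> (B - A)"]
    unfolding affine_segment_integral_def by simp
  with segment_integrand_has_integral[OF assms(1-4)]
  have diff: "((\<lambda>s. ?g s - ?h s) has_integral
                 segment_integral F A B - affine_segment_integral F0 J z A B) {0..1}"
    by (rule has_integral_diff)
  have "norm (?g s - ?h s) \<le> e * norm (B - A)" if s: "s \<in> {0..1} - {}" for s
  proof -
    have "J (A + s *\<^sub>R (B - A) - z) = J (A - z) + s *\<^sub>R J (B - A)"
      by (simp add: J.diff J.add J.scaleR algebra_simps)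
    then have "?g s - ?h s = (F (A + s *\<^sub>R (B - A)) - (F0 + J (A + s *\<^sub>R (B - A) - z))) \<bullet> (B - A)"
      by (simp add: inner_diff_left inner_add_left algebra_simps)
    then have "norm (?g s - ?h s)
        \<le> norm (F (A + s *\<^sub>R (B - A)) - (F0 + J (A + s *\<^sub>R (B - A) - z))) * norm (B - A)"
      by (simp add: Cauchy_Schwarz_ineq2)
    also have "\<dots> \<le> e * norm (B - A)"
      using close s by (intro mult_right_mono) auto
    finally show ?thesis .
  qed
  from has_integral_bound_real[OF _ finite.emptyI diff this]
  show ?thesis using assms(6) by simp
qed

lemma triangle_integral_affine_approx:
  assumes "convex S" "continuous_on S F" "A \<in> S" "B \<in> S" "C \<in> S"
    and "bounded_linear J" "\<forall>u v. J u \<bullet> v = u \<bullet> J v" "0 \<le> e"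
    and close: "\<And>P Q s. P \<in> {A, B, C} \<Longrightarrow> Q \<in> {A, B, C} \<Longrightarrow> s \<in> {0..1} \<Longrightarrow>
      norm (F (P + s *\<^sub>R (Q - P)) - (F0 + J (P + s *\<^sub>R (Q - P) - z))) \<le> e"
  shows "\<bar>triangle_integral F A B C\<bar> \<le> e * triangle_perimeter A B C"
proof -
  have "\<bar>segment_integral F A B - affine_segment_integral F0 J z A B\<bar> \<le> e * norm (B - A)"
    "\<bar>segment_integral F B C - affine_segment_integral F0 J z B C\<bar> \<le> e * norm (C - B)"
    "\<bar>segment_integral F C A - affine_segment_integral F0 J z C A\<bar> \<le> e * norm (A - C)"
    using assms(1-6,8) close by (auto intro!: segment_integral_affine_approx)
  moreover have "affine_segment_integral F0 J z A B + affine_segment_integral F0 J z B C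
      + affine_segment_integral F0 J z C A = 0"
    using assms(6,7) by (intro affine_triangle_integral_eq_0 bounded_linear.linear)
  ultimately show ?thesis
    unfolding triangle_integral_def triangle_perimeter_def by (simp add: algebra_simps)
qed

lemma exists_quarter_subtriangle:
  assumes "convex S" "continuous_on S F" "A \<in> S" "B \<in> S" "C \<in> S"
  obtains A' B' C' where "A' \<in> S" "B' \<in> S" "C' \<in> S"
    "\<bar>triangle_integral F A B C\<bar> \<le> 4 * \<bar>triangle_integral F A' B' C'\<bar>"
    "triangle_perimeter A' B' C' = triangle_perimeter A B C / 2"
    "norm (A' - A) \<le> triangle_perimeter A B C"
proof -
  define mab mbc mca where "mab = A + (1/2) *\<^sub>R (B - A)" and "mbc = B + (1/2) *\<^sub>R (C - B)"
    and "mca = C + (1/2) *\<^sub>R (A - C)"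
  have mid_in: "mab \<in> S" "mbc \<in> S" "mca \<in> S"
    unfolding mab_def mbc_def mca_def using assms by (auto intro!: segment_point_in_convex[of S])
  have "segment_integral F A B = segment_integral F A mab + segment_integral F mab B"
    "segment_integral F B C = segment_integral F B mbc + segment_integral F mbc C"
    "segment_integral F C A = segment_integral F C mca + segment_integral F mca A"
    unfolding mab_def mbc_def mca_def using assms
    by (auto intro: segment_integral_split[of S F, where t = "1/2", simplified])
  moreover have "segment_integral F mca mab = - segment_integral F mab mca"
    "segment_integral F mab mbc = - segment_integral F mbc mab"
    "segment_integral F mbc mca = - segment_integral F mca mbc"
    using mid_in assms(1,2) by (auto intro: segment_integral_reverse)
  ultimately have split: "triangle_integral F A B C = triangle_integral F A mab mca
      + triangle_integral F mab B mbc + triangle_integral F mca mbc C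
      + triangle_integral F mab mbc mca"
    unfolding triangle_integral_def by simp
  have half: "(1/2::real) *\<^sub>R X + (1/2) *\<^sub>R X = X" for X :: 'a
    by (simp flip: scaleR_left_distrib)
  have sides: "mab - A = (1/2) *\<^sub>R (B - A)" "mca - mab = (1/2) *\<^sub>R (C - B)"
    "A - mca = (1/2) *\<^sub>R (A - C)" "B - mab = (1/2) *\<^sub>R (B - A)" "mbc - B = (1/2) *\<^sub>R (C - B)"
    "mab - mbc = (1/2) *\<^sub>R (A - C)" "mbc - mca = (1/2) *\<^sub>R (B - A)" "C - mbc = (1/2) *\<^sub>R (C - B)"
    "mca - C = (1/2) *\<^sub>R (A - C)" "mca - A = (1/2) *\<^sub>R (C - A)"
    "mbc - mab = (1/2) *\<^sub>R (C - A)" "mca - mbc = (1/2) *\<^sub>R (A - B)" "mab - mca = (1/2) *\<^sub>R (B - C)"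
    unfolding mab_def mbc_def mca_def by (simp_all add: algebra_simps half)
  have "triangle_perimeter A mab mca = triangle_perimeter A B C / 2"
    "triangle_perimeter mab B mbc = triangle_perimeter A B C / 2"
    "triangle_perimeter mca mbc C = triangle_perimeter A B C / 2"
    "triangle_perimeter mab mbc mca = triangle_perimeter A B C / 2"
    unfolding triangle_perimeter_def sides by (simp_all add: norm_minus_commute)
  moreover have "norm (A - A) \<le> triangle_perimeter A B C" "norm (mab - A) \<le> triangle_perimeter A B C"
    "norm (mca - A) \<le> triangle_perimeter A B C"
    unfolding triangle_perimeter_def sides by (simp_all add: norm_minus_commute)
  moreover from split consider
      "\<bar>triangle_integral F A B C\<bar> \<le> 4 * \<bar>triangle_integral F A mab mca\<bar>"
    | "\<bar>triangle_integral F A B C\<bar> \<le> 4 * \<bar>triangle_integral F mab B mbc\<bar>"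
    | "\<bar>triangle_integral F A B C\<bar> \<le> 4 * \<bar>triangle_integral F mca mbc C\<bar>"
    | "\<bar>triangle_integral F A B C\<bar> \<le> 4 * \<bar>triangle_integral F mab mbc mca\<bar>"
    by linarith
  ultimately show ?thesis using that mid_in assms(3-5) by metis
qed

lemma exists_divide_power2_less:
  fixes p e :: real
  assumes "0 < e" "0 \<le> p"
  shows "\<exists>N. p / 2^N < e"
proof -
  obtain N where N: "(1/2::real)^N < e / (p + 1)"
    using real_arch_pow_inv[of "e / (p + 1)" "1/2"] assms by auto
  have "p / 2^N \<le> (p + 1) * (1/2)^N" by (simp add: power_one_over divide_right_mono)
  also have "\<dots> < e" using N assms by (simp add: field_simps)
  finally show ?thesis by blast
qed

lemma geometric_increments_converge:
  fixes a :: "nat \<Rightarrow> 'a::banach"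
  assumes "0 \<le> p" and step: "\<And>k. norm (a (Suc k) - a k) \<le> p / 2^k"
  obtains z where "a \<longlonglongrightarrow> z" "\<And>k. norm (a k - z) \<le> 2 * p / 2^k"
proof -
  have tail: "norm (a (k + n) - a k) \<le> 2 * p / 2^k - 2 * p / 2^(k + n)" for k n
  proof (induction n)
    case (Suc n)
    have "norm (a (k + Suc n) - a k) \<le> norm (a (Suc (k + n)) - a (k + n)) + norm (a (k + n) - a k)"
      using norm_triangle_ineq[of "a (Suc (k + n)) - a (k + n)" "a (k + n) - a k"] by simp
    also have "\<dots> \<le> p / 2^(k + n) + (2 * p / 2^k - 2 * p / 2^(k + n))"
      using step[of "k + n"] Suc by linarith
    also have "\<dots> = 2 * p / 2^k - 2 * p / 2^(k + Suc n)" by (simp add: field_simps)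
    finally show ?case .
  qed simp
  have bound: "norm (a n - a k) \<le> 2 * p / 2^k" if kn: "k \<le> n" for k n
  proof -
    obtain m where "n = k + m" using le_Suc_ex[OF kn] by blast
    then show ?thesis using tail[of k m] assms(1) by (smt (verit) divide_nonneg_pos zero_less_power)
  qed
  have "Cauchy a"
  proof (rule metric_CauchyI)
    fix e :: real assume "0 < e"
    then obtain N where N: "4 * p / 2^N < e" using exists_divide_power2_less[of e "4 * p"] assms(1) by auto
    have "dist (a m) (a n) < e" if "N \<le> m" "N \<le> n" for m n
    proof -
      have "dist (a m) (a n) \<le> norm (a m - a N) + norm (a n - a N)"
        unfolding dist_norm by (metis norm_triangle_ineq4 diff_diff_eq2 diff_add_cancel add_diff_eq)
      also have "\<dots> \<le> 2 * p / 2^N + 2 * p / 2^N" using bound that by (intro add_mono)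
      finally show ?thesis using N by simp
    qed
    then show "\<exists>M. \<forall>m\<ge>M. \<forall>n\<ge>M. dist (a m) (a n) < e" by blast
  qed
  then obtain z where lim: "a \<longlonglongrightarrow> z" using Cauchy_convergent_iff convergent_def by blast
  have "norm (a k - z) \<le> 2 * p / 2^k" for k
  proof -
    have "(\<lambda>n. norm (a n - a k)) \<longlonglongrightarrow> norm (z - a k)" by (intro tendsto_intros lim)
    then have "norm (z - a k) \<le> 2 * p / 2^k" by (rule LIMSEQ_le_const2) (use bound in blast)
    then show ?thesis by (simp add: norm_minus_commute)
  qed
  with lim that show ?thesis by blast
qed

lemma nested_quarter_subtriangles:
  assumes "convex S" "continuous_on S F" "A \<in> S" "B \<in> S" "C \<in> S"
  obtains a b c where "\<And>k. a k \<in> S \<and> b k \<in> S \<and> c k \<in> S"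
    "\<And>k. triangle_perimeter (a k) (b k) (c k) = triangle_perimeter A B C / 2^k"
    "\<And>k. \<bar>triangle_integral F A B C\<bar> \<le> 4^k * \<bar>triangle_integral F (a k) (b k) (c k)\<bar>"
    "\<And>k. norm (a (Suc k) - a k) \<le> triangle_perimeter A B C / 2^k"
proof -
  let ?p = "triangle_perimeter A B C" and ?\<tau> = "\<bar>triangle_integral F A B C\<bar>"
  define P where "P = (\<lambda>k (A', B', C'). A' \<in> S \<and> B' \<in> S \<and> C' \<in> S \<and>
      triangle_perimeter A' B' C' = ?p / 2^k \<and> ?\<tau> \<le> 4^k * \<bar>triangle_integral F A' B' C'\<bar>)"
  define Q :: "nat \<Rightarrow> 'a \<times> 'a \<times> 'a \<Rightarrow> 'a \<times> 'a \<times> 'a \<Rightarrow> bool"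
    where "Q = (\<lambda>k (A', B', C') (A'', B'', C''). norm (A'' - A') \<le> ?p / 2^k)"
  have "\<exists>T'. P (Suc k) T' \<and> Q k T T'" if "P k T" for k T
  proof -
    obtain A' B' C' where T: "T = (A', B', C')" by (cases T)
    with that have in_S: "A' \<in> S" "B' \<in> S" "C' \<in> S"
      and per: "triangle_perimeter A' B' C' = ?p / 2^k"
      and int: "?\<tau> \<le> 4^k * \<bar>triangle_integral F A' B' C'\<bar>" unfolding P_def by auto
    obtain A'' B'' C'' where sub: "A'' \<in> S" "B'' \<in> S" "C'' \<in> S"
      "\<bar>triangle_integral F A' B' C'\<bar> \<le> 4 * \<bar>triangle_integral F A'' B'' C''\<bar>"
      "triangle_perimeter A'' B'' C'' = triangle_perimeter A' B' C' / 2"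
      "norm (A'' - A') \<le> triangle_perimeter A' B' C'"
      using exists_quarter_subtriangle[OF assms(1,2) in_S] .
    have "?\<tau> \<le> 4^Suc k * \<bar>triangle_integral F A'' B'' C''\<bar>"
      using order_trans[OF int mult_left_mono[OF sub(4)]] by (simp add: mult_ac)
    with sub per have "P (Suc k) (A'', B'', C'') \<and> Q k T (A'', B'', C'')"
      unfolding P_def Q_def T by simp
    then show ?thesis by blast
  qed
  moreover have "P 0 (A, B, C)" unfolding P_def using assms(3-5) by simp
  ultimately obtain T where T: "\<And>k. P k (T k) \<and> Q k (T k) (T (Suc k))"
    using dependent_nat_choice[of P Q] by blast
  define a b c where "a = (\<lambda>k. fst (T k))" and "b = (\<lambda>k. fst (snd (T k)))"
    and "c = (\<lambda>k. snd (snd (T k)))"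
  have "T k = (a k, b k, c k)" for k unfolding a_def b_def c_def by simp
  with T have PQ: "P k (a k, b k, c k) \<and> Q k (a k, b k, c k) (a (Suc k), b (Suc k), c (Suc k))"
    for k by metis
  show ?thesis by (rule that[of a b c]) (use PQ[unfolded P_def Q_def] in auto)
qed

lemma triangle_integral_local_bound:
  assumes "convex S" "continuous_on S F" and J: "(F has_derivative J) (at z within S)"
    and J_sym: "\<forall>u v. J u \<bullet> v = u \<bullet> J v" and "0 < e"
  obtains d where "0 < d" "\<And>A B C. A \<in> S \<Longrightarrow> B \<in> S \<Longrightarrow> C \<in> S \<Longrightarrow>
      norm (A - z) + 2 * triangle_perimeter A B C < d \<Longrightarrow>
      \<bar>triangle_integral F A B C\<bar>
        \<le> e * (norm (A - z) + 2 * triangle_perimeter A B C) * triangle_perimeter A B C"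
proof -
  have J_lin: "bounded_linear J" using J has_derivative_within_alt by blast
  obtain d where "0 < d" and d: "\<And>y. y \<in> S \<Longrightarrow> norm (y - z) < d \<Longrightarrow>
      norm (F y - F z - J (y - z)) \<le> e * norm (y - z)"
    using J \<open>0 < e\<close> unfolding has_derivative_within_alt by blast
  moreover have "\<bar>triangle_integral F A B C\<bar> \<le> e * r * triangle_perimeter A B C"
    if in_S: "A \<in> S" "B \<in> S" "C \<in> S" and r_def: "r = norm (A - z) + 2 * triangle_perimeter A B C"
      and "r < d" for A B C r
  proof (rule triangle_integral_affine_approx[OF assms(1,2) in_S J_lin J_sym])
    show "0 \<le> e * r" using \<open>0 < e\<close> by (simp add: r_def triangle_perimeter_def)
    fix P Q and s :: real assume PQ: "P \<in> {A, B, C}" "Q \<in> {A, B, C}" and s: "s \<in> {0..1}"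
    define x where "x = P + s *\<^sub>R (Q - P)"
    have x_in: "x \<in> S" unfolding x_def using PQ s in_S assms(1) by (auto intro: segment_point_in_convex)
    have side: "norm (X - Y) \<le> triangle_perimeter A B C" if "X \<in> {A, B, C}" "Y \<in> {A, B, C}" for X Y
      using that unfolding triangle_perimeter_def by (auto simp: norm_minus_commute)
    have "x - z = ((P - A) + s *\<^sub>R (Q - P)) + (A - z)" unfolding x_def by (simp add: algebra_simps)
    then have "norm (x - z) \<le> norm (P - A) + norm (s *\<^sub>R (Q - P)) + norm (A - z)"
      by (metis norm_triangle_ineq add_right_mono order_trans)
    also have "\<dots> = norm (P - A) + s * norm (Q - P) + norm (A - z)" using s by simp
    also have "\<dots> \<le> r"
      using side[OF PQ(1), of A] side[OF PQ(2,1)] s mult_left_le_one_le[of "norm (Q - P)" s]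
      unfolding r_def by auto
    finally have "norm (x - z) \<le> r" .
    with d[OF x_in] \<open>r < d\<close> \<open>0 < e\<close> have "norm (F x - F z - J (x - z)) \<le> e * r"
      by (smt (verit) mult_left_mono)
    then show "norm (F x - (F z + J (x - z))) \<le> e * r" by (simp add: diff_diff_eq)
  qed
  ultimately show ?thesis using that by blast
qed

lemma triangle_integral_eq_0:
  fixes F :: "'a::euclidean_space \<Rightarrow> 'a"
  assumes S: "convex S" "closed S" and F: "continuous_on S F"
    and F_deriv: "\<forall>x\<in>S. \<exists>J. (F has_derivative J) (at x within S) \<and> (\<forall>u v. J u \<bullet> v = u \<bullet> J v)"
    and "A \<in> S" "B \<in> S" "C \<in> S"
  shows "triangle_integral F A B C = 0"
proof (rule ccontr)
  \<comment> \<open>Goursat: the nested quarter triangles shrink to a point \<open>z\<close> near which \<open>F\<close> is, up to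
    \<open>o(norm (x - z))\<close>, an affine field with symmetric linear part, whose circulation is zero.
    So the \<open>k\<close>-th circulation is \<open>o(4\<^sup>-\<^sup>k)\<close>, while it is at least \<open>4\<^sup>-\<^sup>k\<close> times the first.\<close>
  let ?\<tau> = "\<bar>triangle_integral F A B C\<bar>" and ?p = "triangle_perimeter A B C"
  assume "triangle_integral F A B C \<noteq> 0"
  then have \<tau>_pos: "0 < ?\<tau>" by simp
  have p_nonneg: "0 \<le> ?p" unfolding triangle_perimeter_def by simp
  obtain a b c where in_S: "\<And>k. a k \<in> S \<and> b k \<in> S \<and> c k \<in> S"
    and per: "\<And>k. triangle_perimeter (a k) (b k) (c k) = ?p / 2^k"
    and int: "\<And>k. ?\<tau> \<le> 4^k * \<bar>triangle_integral F (a k) (b k) (c k)\<bar>"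
    and step: "\<And>k. norm (a (Suc k) - a k) \<le> ?p / 2^k"
    using nested_quarter_subtriangles[OF S(1) F assms(5-7)] by blast
  obtain z where lim: "a \<longlonglongrightarrow> z" and near: "\<And>k. norm (a k - z) \<le> 2 * ?p / 2^k"
    using geometric_increments_converge[OF p_nonneg step] by blast
  have "z \<in> S" using closed_sequentially[OF S(2) _ lim] in_S by blast
  then obtain J where J: "(F has_derivative J) (at z within S)" and J_sym: "\<forall>u v. J u \<bullet> v = u \<bullet> J v"
    using F_deriv by blast
  define e where "e = ?\<tau> / (8 * (?p^2 + 1))"
  have e_pos: "0 < e"
    unfolding e_def using \<tau>_pos by (intro divide_pos_pos mult_pos_pos add_nonneg_pos) auto
  obtain d where "0 < d" and local: "\<And>A B C. A \<in> S \<Longrightarrow> B \<in> S \<Longrightarrow> C \<in> S \<Longrightarrow>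
      norm (A - z) + 2 * triangle_perimeter A B C < d \<Longrightarrow>
      \<bar>triangle_integral F A B C\<bar>
        \<le> e * (norm (A - z) + 2 * triangle_perimeter A B C) * triangle_perimeter A B C"
    using triangle_integral_local_bound[OF S(1) F J J_sym e_pos] by blast
  obtain k where k: "4 * ?p / 2^k < d"
    using exists_divide_power2_less[OF \<open>0 < d\<close>, of "4 * ?p"] p_nonneg by auto
  have r: "norm (a k - z) + 2 * triangle_perimeter (a k) (b k) (c k) \<le> 4 * ?p / 2^k"
    using near[of k] per[of k] by simp
  have "\<bar>triangle_integral F (a k) (b k) (c k)\<bar> \<le> e * (4 * ?p / 2^k) * (?p / 2^k)"
    using local[of "a k" "b k" "c k"] in_S[of k] per[of k] r k e_pos p_nonneg
    by (smt (verit) divide_nonneg_pos mult_left_mono mult_right_mono zero_less_power)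
  also have "\<dots> = 4 * e * ?p^2 / 4^k"
    by (simp add: power2_eq_square power_mult_distrib[symmetric] field_simps)
  finally have "?\<tau> \<le> 4 * e * ?p^2"
    using int[of k] by (simp add: field_simps)
  also have "\<dots> = ?\<tau> * (?p^2 / (2 * (?p^2 + 1)))"
  proof -
    have "0 < ?p^2 + 1" using zero_le_power2[of ?p] by linarith
    then show ?thesis unfolding e_def by (simp add: field_simps)
  qed
  also have "\<dots> < ?\<tau>"
    using \<tau>_pos by (simp add: mult_less_cancel_left1 field_simps add_pos_nonneg)
  finally show False by simp
qed

section \<open>Convex functions, subgradients and derivatives\<close>

lemma convex_on_if_subgradient:
  fixes f :: "'a::real_inner \<Rightarrow> real"
  assumes "convex S" and sub: "\<And>x y. x \<in> S \<Longrightarrow> y \<in> S \<Longrightarrow> f x + g x \<bullet> (y - x) \<le> f y"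
  shows "convex_on S f"
  unfolding convex_on_def
proof (intro conjI ballI allI impI)
  fix x y and u v :: real
  assume xy: "x \<in> S" "y \<in> S" and uv: "0 \<le> u" "0 \<le> v" "u + v = 1"
  define m where "m = u *\<^sub>R x + v *\<^sub>R y"
  have "m \<in> S" unfolding m_def using assms(1) xy uv by (rule convexD)
  then have "u * (f m + g m \<bullet> (x - m)) + v * (f m + g m \<bullet> (y - m)) \<le> u * f x + v * f y"
    using sub xy uv by (intro add_mono mult_left_mono) auto
  moreover have "u * (f m + g m \<bullet> (x - m)) + v * (f m + g m \<bullet> (y - m))
      = (u + v) * f m + g m \<bullet> (u *\<^sub>R x + v *\<^sub>R y - (u + v) *\<^sub>R m)"
    by (simp add: algebra_simps inner_diff_right inner_add_right)
  ultimately show "f (u *\<^sub>R x + v *\<^sub>R y) \<le> u * f x + v * f y" using uv unfolding m_def by simp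
qed (fact assms(1))

lemma has_derivative_if_continuous_subgradient:
  fixes f :: "'a::real_inner \<Rightarrow> real"
  assumes V: "open V" "c \<in> V" and sub: "\<And>x y. x \<in> V \<Longrightarrow> y \<in> V \<Longrightarrow> f x + g x \<bullet> (y - x) \<le> f y"
    and "isCont g c"
  shows "(f has_derivative (\<lambda>h. g c \<bullet> h)) (at c)"
  unfolding has_derivative_at_alt
proof (intro conjI allI impI)
  show "bounded_linear ((\<bullet>) (g c))" by (rule bounded_linear_inner_right)
  fix e :: real assume "0 < e"
  obtain d1 where "0 < d1" and d1: "\<And>y. dist y c < d1 \<Longrightarrow> dist (g y) (g c) < e"
    using \<open>isCont g c\<close> \<open>0 < e\<close> unfolding continuous_at_eps_delta by blast
  obtain d2 where "0 < d2" "ball c d2 \<subseteq> V" using V open_contains_ball by blast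
  have "norm (f y - f c - g c \<bullet> (y - c)) \<le> e * norm (y - c)" if y: "norm (y - c) < min d1 d2" for y
  proof -
    have "y \<in> V" using y \<open>ball c d2 \<subseteq> V\<close> by (auto simp: dist_norm norm_minus_commute)
    have "0 \<le> f y - f c - g c \<bullet> (y - c)" using sub[OF V(2) \<open>y \<in> V\<close>] by simp
    moreover have "f y - f c \<le> g y \<bullet> (y - c)"
      using sub[OF \<open>y \<in> V\<close> V(2)] by (simp add: inner_diff_right)
    moreover have "(g y - g c) \<bullet> (y - c) \<le> e * norm (y - c)"
      using d1[of y] y Cauchy_Schwarz_ineq2[of "g y - g c" "y - c"]
      by (smt (verit) dist_norm mult_right_mono norm_ge_zero min_less_iff_conj)
    ultimately show ?thesis by (simp add: inner_diff_left)
  qed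
  then show "\<exists>d>0. \<forall>y. norm (y - c) < d \<longrightarrow> norm (f y - f c - g c \<bullet> (y - c)) \<le> e * norm (y - c)"
    using \<open>0 < d1\<close> \<open>0 < d2\<close> by (intro exI[of _ "min d1 d2"]) auto
qed

lemma convex_on_locally_lipschitz:
  fixes f :: "'a::euclidean_space \<Rightarrow> real"
  assumes U: "open U" and f: "convex_on U f" and ball: "cball c (2 * r) \<subseteq> U" and "0 < r"
  obtains K where "\<And>x y. x \<in> cball c r \<Longrightarrow> y \<in> cball c r \<Longrightarrow> \<bar>f x - f y\<bar> \<le> K * norm (x - y)"
proof -
  have "continuous_on (cball c (2 * r)) f"
    using convex_on_continuous[OF U f] ball continuous_on_subset by blast
  then have "bounded (f ` cball c (2 * r))" by (intro compact_imp_bounded compact_continuous_image) auto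
  then obtain M where "\<forall>z\<in>cball c (2 * r). \<bar>f z\<bar> \<le> M" unfolding bounded_iff by auto
  then have M: "\<And>z. z \<in> cball c (2 * r) \<Longrightarrow> \<bar>f z\<bar> \<le> M" by blast
  have one_sided: "f y - f x \<le> (2 * M / r) * norm (x - y)" if xy: "x \<in> cball c r" "y \<in> cball c r" for x y
  proof (cases "x = y")
    case False
    \<comment> \<open>Prolong the segment from \<open>x\<close> through \<open>y\<close> by length \<open>r\<close>; \<open>y\<close> divides it in ratio \<open>norm D : r\<close>.\<close>
    define D where "D = y - x"
    have nD: "norm D > 0" unfolding D_def using False by simp
    define z where "z = y + (r / norm D) *\<^sub>R D"
    define t where "t = norm D / (norm D + r)"
    have t: "0 \<le> t" "t \<le> 1" "t \<le> norm D / r"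
      unfolding t_def using nD \<open>0 < r\<close> by (auto simp: frac_le divide_le_eq_1 add_pos_pos)
    have "dist c z \<le> dist c y + norm ((r / norm D) *\<^sub>R D)"
      unfolding z_def dist_norm
      by (metis diff_diff_eq2 norm_triangle_ineq4 add.commute diff_add_eq_diff_diff_swap)
    then have z: "z \<in> cball c (2 * r)" using xy nD \<open>0 < r\<close> by simp
    have x: "x \<in> cball c (2 * r)" using xy \<open>0 < r\<close> by auto
    have ndr: "norm D + r \<noteq> 0" using nD \<open>0 < r\<close> by linarith
    have "z - x = (1 + r / norm D) *\<^sub>R D" unfolding z_def D_def by (simp add: scaleR_left_distrib)
    also have "1 + r / norm D = (norm D + r) / norm D" using nD by (simp add: field_simps)
    finally have "t *\<^sub>R (z - x) = D"
      unfolding t_def using nD ndr by simp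
    then have "(1 - t) *\<^sub>R x + t *\<^sub>R z = y"
      unfolding D_def by (simp add: algebra_simps)
    then have "f y \<le> (1 - t) * f x + t * f z"
      using convex_onD[OF f t(1,2)] x z ball by (metis subsetD)
    then have "f y - f x \<le> t * (f z - f x)" by (simp add: algebra_simps)
    also have "\<dots> \<le> t * (2 * M)" using M[OF x] M[OF z] t by (intro mult_left_mono) auto
    also have "\<dots> \<le> (norm D / r) * (2 * M)"
      using M[OF z] t(3) by (intro mult_right_mono) auto
    finally show ?thesis unfolding D_def by (simp add: norm_minus_commute field_simps)
  qed simp
  show ?thesis
    by (rule that[of "2 * M / r"]) (use one_sided norm_minus_commute in \<open>smt (verit)\<close>)
qed

lemma convex_on_above_derivative:
  fixes f :: "'a::real_normed_vector \<Rightarrow> real"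
  assumes f: "convex_on U f" and "x \<in> U" "y \<in> U" and f': "(f has_derivative f') (at x)"
  shows "f x + f' (y - x) \<le> f y"
proof (rule field_le_epsilon)
  interpret f': bounded_linear f' using f' has_derivative_bounded_linear by blast
  fix e :: real assume "0 < e"
  define D where "D = y - x"
  show "f x + f' (y - x) \<le> f y + e"
  proof (cases "D = 0")
    case False
    then have nD: "0 < norm D" by simp
    obtain d where "0 < d" and d: "\<And>z. norm (z - x) < d \<Longrightarrow>
        norm (f z - f x - f' (z - x)) \<le> (e / norm D) * norm (z - x)"
      using f' \<open>0 < e\<close> nD unfolding has_derivative_at_alt by (meson divide_pos_pos)
    define s where "s = min 1 (d / (2 * norm D))"
    have s: "0 < s" "s \<le> 1" "s * norm D < d"
      unfolding s_def using \<open>0 < d\<close> nD by (auto simp: min_mult_distrib_right min_less_iff_disj)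
    then have "s * f' D \<le> f (x + s *\<^sub>R D) - f x + (e / norm D) * (s * norm D)"
      using d[of "x + s *\<^sub>R D"] by (simp add: f'.scaleR abs_le_iff)
    moreover have "x + s *\<^sub>R D = (1 - s) *\<^sub>R x + s *\<^sub>R y" unfolding D_def by (simp add: algebra_simps)
    then have "f (x + s *\<^sub>R D) \<le> (1 - s) * f x + s * f y"
      using convex_onD[OF f, of s x y] s assms(2,3) by simp
    ultimately have "s * f' D \<le> s * (f y - f x + e)" using nD by (simp add: algebra_simps)
    then show ?thesis using s unfolding D_def by simp
  qed (use \<open>0 < e\<close> D_def in simp)
qed

lemma subgradient_locally_bounded:
  fixes f :: "'a::euclidean_space \<Rightarrow> real"
  assumes U: "open U" and f: "convex_on U f" and "c \<in> U"
    and sub: "\<And>x y. x \<in> U \<Longrightarrow> y \<in> U \<Longrightarrow> f x + g x \<bullet> (y - x) \<le> f y"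
  obtains r B where "0 < r" "ball c r \<subseteq> U" "\<And>x. x \<in> ball c r \<Longrightarrow> norm (g x) \<le> B"
proof -
  obtain \<rho> where "0 < \<rho>" "ball c \<rho> \<subseteq> U" using U \<open>c \<in> U\<close> open_contains_ball by blast
  define r where "r = \<rho> / 4"
  have "0 < r" and cball: "cball c (2 * r) \<subseteq> U"
    using \<open>0 < \<rho>\<close> \<open>ball c \<rho> \<subseteq> U\<close> unfolding r_def by (auto simp: subset_eq)
  obtain K where K: "\<And>x y. x \<in> cball c r \<Longrightarrow> y \<in> cball c r \<Longrightarrow> \<bar>f x - f y\<bar> \<le> K * norm (x - y)"
    using convex_on_locally_lipschitz[OF U f cball \<open>0 < r\<close>] by blast
  have "norm (g x) \<le> \<bar>K\<bar>" if x: "x \<in> ball c (r / 2)" for x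
  proof (cases "g x = 0")
    case False
    \<comment> \<open>Test the subgradient inequality in the direction of \<open>g x\<close> against the Lipschitz bound.\<close>
    define u where "u = (r / 2 / norm (g x)) *\<^sub>R g x"
    have norm_u: "norm u = r / 2" unfolding u_def using False \<open>0 < r\<close> by simp
    have "dist c (x + u) \<le> dist c x + norm u"
      by (metis dist_norm dist_triangle2 add_diff_cancel_left' norm_minus_commute)
    then have "x + u \<in> cball c r" using x norm_u by simp
    moreover have "x \<in> cball c r" using x zero_le_dist[of c x] by (simp del: zero_le_dist)
    ultimately have "g x \<bullet> u \<le> K * norm u"
      using sub[of x "x + u"] K[of "x + u" x] cball \<open>0 < r\<close>
      by (smt (verit) add_diff_cancel_left' mem_cball subsetD)
    moreover have "g x \<bullet> u = r / 2 * norm (g x)"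
      unfolding u_def using False by (simp add: power2_norm_eq_inner[symmetric] power2_eq_square)
    ultimately show ?thesis using norm_u \<open>0 < r\<close> by simp
  qed simp
  moreover have "ball c (r / 2) \<subseteq> U" using cball \<open>0 < r\<close> by (auto simp: subset_eq)
  ultimately show ?thesis using that[of "r / 2" "\<bar>K\<bar>"] \<open>0 < r\<close> by force
qed

lemma convex_on_gradient_directional_bound:
  fixes f :: "'a::euclidean_space \<Rightarrow> real"
  assumes U: "open U" and f: "convex_on U f"
    and df: "\<And>x. x \<in> U \<Longrightarrow> (f has_derivative (\<lambda>h. g x \<bullet> h)) (at x)"
    and "c \<in> U" "norm v = 1" "0 < e"
  shows "eventually (\<lambda>x. g x \<bullet> v < g c \<bullet> v + e) (at c)"
proof -
  have f_cont: "isCont f y" if "y \<in> U" for y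
    using convex_on_continuous[OF U f] U that continuous_on_eq_continuous_at by blast
  obtain \<rho> where "0 < \<rho>" and \<rho>: "ball c \<rho> \<subseteq> U" using U \<open>c \<in> U\<close> open_contains_ball by blast
  obtain d where "0 < d" and d: "\<And>y. norm (y - c) < d \<Longrightarrow>
      norm (f y - f c - g c \<bullet> (y - c)) \<le> (e / 4) * norm (y - c)"
    using df[OF \<open>c \<in> U\<close>] \<open>0 < e\<close> unfolding has_derivative_at_alt by (meson divide_pos_pos zero_less_numeral)
  define t where "t = min (\<rho> / 2) (d / 2)"
  have t: "0 < t" "t < d" "t \<le> \<rho> / 2" unfolding t_def using \<open>0 < \<rho>\<close> \<open>0 < d\<close> by auto
  have "\<bar>f (c + t *\<^sub>R v) - f c - t * (g c \<bullet> v)\<bar> \<le> e * t / 4"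
    using d[of "c + t *\<^sub>R v"] t \<open>norm v = 1\<close> by simp
  then have up: "f (c + t *\<^sub>R v) - f c \<le> t * (g c \<bullet> v) + e * t / 4"
    unfolding abs_le_iff by linarith
  have "c + t *\<^sub>R v \<in> U" using \<rho> t \<open>norm v = 1\<close> by (auto simp: dist_norm)
  then have "eventually (\<lambda>x. dist (f (x + t *\<^sub>R v)) (f (c + t *\<^sub>R v)) < e * t / 4) (at c)"
    using \<open>0 < e\<close> t by (intro tendstoD isCont_tendsto_compose[OF f_cont] tendsto_intros) auto
  moreover have "eventually (\<lambda>x. dist (f x) (f c) < e * t / 4) (at c)"
    using f_cont[OF \<open>c \<in> U\<close>] \<open>0 < e\<close> t unfolding isCont_def by (intro tendstoD) auto
  moreover have "eventually (\<lambda>x. dist x c < \<rho> / 2) (at c)"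
    unfolding eventually_at using \<open>0 < \<rho>\<close> by (intro exI[of _ "\<rho> / 2"]) auto
  ultimately show ?thesis
  proof eventually_elim
    case (elim x)
    then have "x \<in> U" "x + t *\<^sub>R v \<in> U"
      using \<rho> t \<open>norm v = 1\<close> norm_triangle_ineq[of "x - c" "t *\<^sub>R v"]
      by (auto simp: dist_norm norm_minus_commute subset_eq algebra_simps)
    then have "f x + t * (g x \<bullet> v) \<le> f (x + t *\<^sub>R v)"
      using convex_on_above_derivative[OF f _ _ df, of x "x + t *\<^sub>R v"] by simp
    moreover have "0 < e * t" using \<open>0 < e\<close> t by simp
    ultimately have "t * (g x \<bullet> v) < t * (g c \<bullet> v) + e * t"
      using elim(1,2) up unfolding dist_real_def abs_less_iff by linarith
    then have "t * (g x \<bullet> v) < t * (g c \<bullet> v + e)" by (simp add: distrib_left mult.commute)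
    then show ?case using t by simp
  qed
qed

lemma convex_on_gradient_continuous:
  fixes f :: "'a::euclidean_space \<Rightarrow> real"
  assumes "open U" "convex_on U f" "\<And>x. x \<in> U \<Longrightarrow> (f has_derivative (\<lambda>h. g x \<bullet> h)) (at x)"
    and "c \<in> U"
  shows "isCont g c"
proof -
  have "((\<lambda>x. g x \<bullet> b) \<longlongrightarrow> g c \<bullet> b) (at c)" if "b \<in> Basis" for b
  proof (rule tendstoI)
    fix e :: real assume "0 < e"
    have "eventually (\<lambda>x. g x \<bullet> b < g c \<bullet> b + e) (at c)"
      "eventually (\<lambda>x. g x \<bullet> (- b) < g c \<bullet> (- b) + e) (at c)"
      by (intro convex_on_gradient_directional_bound[OF assms(1,2)]; use assms(3,4) \<open>0 < e\<close> that in simp)+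
    then show "eventually (\<lambda>x. dist (g x \<bullet> b) (g c \<bullet> b) < e) (at c)"
      by eventually_elim (auto simp: dist_real_def abs_less_iff)
  qed
  then show ?thesis unfolding isCont_def by (subst tendsto_componentwise_iff) blast
qed

lemma has_derivative_if_quadratic_remainder:
  fixes f :: "'a::real_normed_vector \<Rightarrow> real"
  assumes "bounded_linear f'" "0 < r"
    and rem: "\<And>y. norm (y - c) < r \<Longrightarrow> \<bar>f y - f c - f' (y - c)\<bar> \<le> M * (norm (y - c))\<^sup>2"
  shows "(f has_derivative f') (at c)"
  unfolding has_derivative_at_alt
proof (intro conjI allI impI)
  fix e :: real assume "0 < e"
  define d where "d = min r (e / (\<bar>M\<bar> + 1))"
  have "\<bar>f y - f c - f' (y - c)\<bar> \<le> e * norm (y - c)" if y: "norm (y - c) < d" for y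
  proof -
    have "norm (y - c) < e / (\<bar>M\<bar> + 1)" using y unfolding d_def by simp
    then have "norm (y - c) * (\<bar>M\<bar> + 1) \<le> e"
      by (simp add: less_divide_eq add_nonneg_pos)
    then have "M * (norm (y - c))\<^sup>2 \<le> e * norm (y - c)"
      by (smt (verit) mult_right_mono norm_ge_zero power2_eq_square mult.commute mult.assoc)
    with rem[of y] y show ?thesis unfolding d_def by simp
  qed
  then show "\<exists>d>0. \<forall>y. norm (y - c) < d \<longrightarrow> norm (f y - f c - f' (y - c)) \<le> e * norm (y - c)"
    using \<open>0 < r\<close> \<open>0 < e\<close> unfolding d_def by (intro exI[of _ d]) (auto simp: d_def)
qed (fact assms(1))

lemma concave_on_sum_fun:
  assumes "finite A" "convex S" "\<And>a. a \<in> A \<Longrightarrow> concave_on S (f a)"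
  shows "concave_on S (\<lambda>x. \<Sum>a\<in>A. f a x)"
  using assms by (induction A rule: finite_induct) (auto simp: concave_on_const intro: concave_on_add)

section \<open>The potential of the cost map and its conjugate\<close>

lemma convex_nonneg_orthant: "convex (nonneg_orthant :: (real ^ 'l::finite) set)"
  unfolding nonneg_orthant_def convex_def by (auto intro!: add_nonneg_nonneg)

lemma closed_nonneg_orthant: "closed (nonneg_orthant :: (real ^ 'l::finite) set)"
proof -
  have "nonneg_orthant = (\<Inter>l. {X :: real ^ 'l. 0 \<le> X $ l})" unfolding nonneg_orthant_def by auto
  then show ?thesis using closed_halfspace_component_ge_cart[of 0] by (metis closed_INT)
qed

lemma zero_in_nonneg_orthant: "0 \<in> nonneg_orthant"
  unfolding nonneg_orthant_def by simp

locale cost_map =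
  fixes cm :: "real ^ 'l::finite \<Rightarrow> real ^ 'l"
  assumes continuous: "continuous_on nonneg_orthant cm"
    and symmetric_jacobian: "\<forall>X\<in>nonneg_orthant. \<exists>J.
      (cm has_derivative J) (at X within nonneg_orthant) \<and> (\<forall>u v. J u \<bullet> v = u \<bullet> J v)"
    and strictly_monotone: "\<forall>X\<in>nonneg_orthant. \<forall>Y\<in>nonneg_orthant.
      X \<noteq> Y \<longrightarrow> 0 < (cm X - cm Y) \<bullet> (X - Y)"
begin

lemma monotone_cm: "X \<in> nonneg_orthant \<Longrightarrow> Y \<in> nonneg_orthant \<Longrightarrow> 0 \<le> (cm X - cm Y) \<bullet> (X - Y)"
  using strictly_monotone by (cases "X = Y") (auto intro: less_imp_le)

lemma inj_on_cm: "inj_on cm nonneg_orthant"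
  using strictly_monotone by (force intro: inj_onI)

lemma Cpot_diff:
  assumes "X \<in> nonneg_orthant" "Y \<in> nonneg_orthant"
  shows "Cpot cm Y - Cpot cm X = segment_integral cm X Y"
proof -
  have "triangle_integral cm 0 X Y = 0"
    using convex_nonneg_orthant closed_nonneg_orthant continuous symmetric_jacobian
      zero_in_nonneg_orthant assms by (rule triangle_integral_eq_0)
  moreover have "segment_integral cm Y 0 = - segment_integral cm 0 Y"
    using convex_nonneg_orthant continuous zero_in_nonneg_orthant assms(2)
    by (rule segment_integral_reverse)
  ultimately show ?thesis unfolding triangle_integral_def Cpot_def segment_integral_def by simp
qed

lemma Cpot_above_tangent:
  assumes "X \<in> nonneg_orthant" "Y \<in> nonneg_orthant"
  shows "Cpot cm X + cm X \<bullet> (Y - X) \<le> Cpot cm Y"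
proof -
  have "cm X \<bullet> (Y - X) \<le> cm (X + s *\<^sub>R (Y - X)) \<bullet> (Y - X)" if "s \<in> {0..1}" for s
  proof -
    have "X + s *\<^sub>R (Y - X) \<in> nonneg_orthant"
      using segment_point_in_convex[OF convex_nonneg_orthant assms] that by auto
    then have "0 \<le> s * ((cm (X + s *\<^sub>R (Y - X)) - cm X) \<bullet> (Y - X))"
      using monotone_cm[of "X + s *\<^sub>R (Y - X)" X] assms(1) by simp
    then show ?thesis using that by (cases "s = 0") (auto simp: zero_le_mult_iff inner_diff_left)
  qed
  then have "integral {0..1} (\<lambda>s::real. cm X \<bullet> (Y - X)) \<le> segment_integral cm X Y"
    using segment_integrand_has_integral[OF convex_nonneg_orthant continuous assms]
    unfolding segment_integral_def by (intro integral_le) (auto simp: has_integral_integrable)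
  then show ?thesis using Cpot_diff[OF assms] by simp
qed

lemma Cstar_cm:
  assumes "X \<in> nonneg_orthant"
  shows "bdd_above ((\<lambda>Y. cm X \<bullet> Y - Cpot cm Y) ` nonneg_orthant)"
    and "Cstar cm (cm X) = cm X \<bullet> X - Cpot cm X"
proof -
  have le: "cm X \<bullet> Y - Cpot cm Y \<le> cm X \<bullet> X - Cpot cm X" if "Y \<in> nonneg_orthant" for Y
    using Cpot_above_tangent[OF assms that] by (simp add: inner_diff_right)
  then show "bdd_above ((\<lambda>Y. cm X \<bullet> Y - Cpot cm Y) ` nonneg_orthant)" by (rule bdd_aboveI2)
  show "Cstar cm (cm X) = cm X \<bullet> X - Cpot cm X"
    unfolding Cstar_def by (rule cSup_eq_maximum) (use assms le in auto)
qed

lemma cinv_cm: "X \<in> nonneg_orthant \<Longrightarrow> cinv cm (cm X) = X"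
  unfolding cinv_def by (rule the_inv_into_f_f[OF inj_on_cm])

lemma cinv_in_nonneg_orthant: "c \<in> cm ` nonneg_orthant \<Longrightarrow> cinv cm c \<in> nonneg_orthant"
  using cinv_cm by auto

lemma cm_cinv: "c \<in> cm ` nonneg_orthant \<Longrightarrow> cm (cinv cm c) = c"
  using cinv_cm by auto

lemma Cstar_subgradient:
  assumes "c \<in> cm ` nonneg_orthant" "c' \<in> cm ` nonneg_orthant"
  shows "Cstar cm c + cinv cm c \<bullet> (c' - c) \<le> Cstar cm c'"
proof -
  obtain X X' where X: "X \<in> nonneg_orthant" "c = cm X" and X': "X' \<in> nonneg_orthant" "c' = cm X'"
    using assms by auto
  have "c' \<bullet> X - Cpot cm X \<le> Cstar cm c'"
    unfolding Cstar_def using Cstar_cm(1)[OF X'(1)] X X'(2) by (intro cSUP_upper) auto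
  then show ?thesis using Cstar_cm(2)[OF X(1)] cinv_cm[OF X(1)] X(2)
    by (simp add: inner_diff_right inner_commute)
qed

lemma convex_on_Cstar: "convex S \<Longrightarrow> S \<subseteq> cm ` nonneg_orthant \<Longrightarrow> convex_on S (Cstar cm)"
  by (rule convex_on_if_subgradient[of _ _ "cinv cm"]) (auto intro: Cstar_subgradient)

lemma isCont_cinv:
  assumes "c \<in> interior (cm ` nonneg_orthant)"
  shows "isCont (cinv cm) c"
proof -
  obtain \<rho> where "0 < \<rho>" and \<rho>: "ball c \<rho> \<subseteq> cm ` nonneg_orthant" using assms mem_interior by blast
  have "convex_on (ball c \<rho>) (Cstar cm)" using \<rho> by (intro convex_on_Cstar) auto
  moreover have "Cstar cm x + cinv cm x \<bullet> (y - x) \<le> Cstar cm y"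
    if "x \<in> ball c \<rho>" "y \<in> ball c \<rho>" for x y
    using that \<rho> by (intro Cstar_subgradient) auto
  ultimately obtain r B where "0 < r" and r: "ball c r \<subseteq> ball c \<rho>"
    and B: "\<And>x. x \<in> ball c r \<Longrightarrow> norm (cinv cm x) \<le> B"
    using subgradient_locally_bounded[OF open_ball _ centre_in_ball[THEN iffD2, OF \<open>0 < \<rho>\<close>]]
    by blast
  \<comment> \<open>Near \<open>c\<close>, \<open>cinv cm\<close> is the inverse of \<open>cm\<close> restricted to the compact set \<open>K\<close>.\<close>
  define K :: "(real ^ 'l) set" where "K = nonneg_orthant \<inter> cball 0 B"
  have "continuous_on K cm" using continuous unfolding K_def by (rule continuous_on_subset) auto
  moreover have "compact K" unfolding K_def by (intro closed_Int_compact closed_nonneg_orthant compact_cball)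
  moreover have "\<forall>x\<in>K. cinv cm (cm x) = x" unfolding K_def using cinv_cm by auto
  ultimately have "continuous_on (cm ` K) (cinv cm)" by (rule continuous_on_inv)
  moreover have "ball c r \<subseteq> cm ` K"
  proof
    fix c' assume c': "c' \<in> ball c r"
    then have "c' \<in> cm ` nonneg_orthant" using r \<rho> by auto
    then have "cinv cm c' \<in> K" "c' = cm (cinv cm c')"
      using cinv_in_nonneg_orthant cm_cinv B[OF c'] unfolding K_def by auto
    then show "c' \<in> cm ` K" by blast
  qed
  ultimately have "continuous_on (ball c r) (cinv cm)" by (rule continuous_on_subset)
  then show ?thesis using \<open>0 < r\<close> by (simp add: continuous_on_interior)
qed

lemma Cstar_has_derivative:
  assumes "c \<in> interior (cm ` nonneg_orthant)"
  shows "(Cstar cm has_derivative (\<lambda>h. cinv cm c \<bullet> h)) (at c)"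
proof (rule has_derivative_if_continuous_subgradient[OF open_interior assms])
  fix x y assume "x \<in> interior (cm ` nonneg_orthant)" "y \<in> interior (cm ` nonneg_orthant)"
  then show "Cstar cm x + cinv cm x \<bullet> (y - x) \<le> Cstar cm y"
    using interior_subset by (blast intro: Cstar_subgradient)
qed (rule isCont_cinv[OF assms])

end

section \<open>Concavity of the expected minimum costs\<close>

locale ngev =
  fixes src tgt :: "'l::finite \<Rightarrow> 'n::finite" and alpha :: "'l \<Rightarrow> real" and theta :: "'n \<Rightarrow> real"
    and d :: 'n and q :: "'n \<Rightarrow> real" and Costs :: "(real ^ 'l) set"
  assumes theta_pos: "\<And>i. 0 < theta i" and alpha_nonneg: "\<And>l. 0 \<le> alpha l"
    and q_nonneg: "\<And>i. 0 \<le> q i"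
    and mu_wellposed: "\<And>c. c \<in> Costs \<Longrightarrow> \<exists>!mu. mu_eqs src tgt alpha theta d c mu"
    and flow_wellposed: "\<And>t. t \<in> Costs \<Longrightarrow> \<exists>!x. flow_eqs src tgt
      (ngev_prob src tgt alpha theta (mu_of src tgt alpha theta d t) t) d q x"
begin

abbreviation mu where "mu \<equiv> mu_of src tgt alpha theta d"

definition expsum :: "real ^ 'l \<Rightarrow> ('n \<Rightarrow> real) \<Rightarrow> 'n \<Rightarrow> real" where
  "expsum c w i = (\<Sum>l\<in>{l. src l = i}. alpha l * exp (- theta i * (c $ l + w (tgt l))))"

definition mu_lhs :: "real ^ 'l \<Rightarrow> ('n \<Rightarrow> real) \<Rightarrow> 'n \<Rightarrow> real" where
  "mu_lhs c w i = (\<Sum>l\<in>{l. src l = i}. alpha l * exp (- theta i * (c $ l + w (tgt l) - w i)))"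

text \<open>The equations \<open>mu_lhs c w i = 1\<close> (\<open>i \<noteq> d\<close>), \<open>w d = 0\<close> in fixed-point form \<open>w = bellman c w\<close>.\<close>

definition bellman :: "real ^ 'l \<Rightarrow> ('n \<Rightarrow> real) \<Rightarrow> 'n \<Rightarrow> real" where
  "bellman c w i = (if i = d then 0 else - ln (expsum c w i) / theta i)"

lemma mu_solves: "c \<in> Costs \<Longrightarrow> mu_eqs src tgt alpha theta d c (mu c)"
  unfolding mu_of_def by (rule theI'[OF mu_wellposed])

lemma mu_unique: "c \<in> Costs \<Longrightarrow> mu_eqs src tgt alpha theta d c w \<Longrightarrow> w = mu c"
  using mu_solves mu_wellposed by blast

lemma mu_dest: "c \<in> Costs \<Longrightarrow> mu c d = 0"
  using mu_solves unfolding mu_eqs_def by blast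

lemma mu_lhs_mu: "c \<in> Costs \<Longrightarrow> i \<noteq> d \<Longrightarrow> mu_lhs c (mu c) i = 1"
  using mu_solves unfolding mu_eqs_def mu_lhs_def by blast

lemma mu_lhs_eq: "mu_lhs c w i = exp (theta i * w i) * expsum c w i"
  unfolding mu_lhs_def expsum_def sum_distrib_left
  by (rule sum.cong) (simp_all add: algebra_simps flip: exp_add)

text \<open>Every node other than \<open>d\<close> has an outgoing link of positive weight, since otherwise
  its equation in \<open>mu_eqs\<close> would read \<open>0 = 1\<close>.\<close>

lemma expsum_pos:
  assumes "c \<in> Costs" "i \<noteq> d"
  shows "0 < expsum c' w i"
proof -
  have "\<exists>l\<in>{l. src l = i}. alpha l \<noteq> 0"
  proof (rule ccontr)
    assume "\<not> ?thesis"
    then have "mu_lhs c (mu c) i = 0" unfolding mu_lhs_def by simp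
    with mu_lhs_mu[OF assms] show False by simp
  qed
  then obtain l where "src l = i" "alpha l \<noteq> 0" by blast
  moreover have "0 \<le> alpha l" by (rule alpha_nonneg)
  ultimately show ?thesis
    unfolding expsum_def by (intro sum_pos2[of _ l]) (auto intro: alpha_nonneg mult_nonneg_nonneg)
qed

lemma bellman_eq_iff:
  assumes "c \<in> Costs" "i \<noteq> d"
  shows "bellman c w i = w i \<longleftrightarrow> mu_lhs c w i = 1"
    and "w i \<le> bellman c w i \<longleftrightarrow> mu_lhs c w i \<le> 1"
proof -
  have pos: "0 < expsum c w i" using expsum_pos[OF assms] .
  have "mu_lhs c w i = exp (theta i * w i - theta i * bellman c w i)"
    using assms(2) pos theta_pos[of i] unfolding mu_lhs_eq bellman_def by (simp add: exp_diff exp_add)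
  moreover have "theta i * w i - theta i * bellman c w i = theta i * (w i - bellman c w i)"
    by (simp add: algebra_simps)
  ultimately show "bellman c w i = w i \<longleftrightarrow> mu_lhs c w i = 1"
    and "w i \<le> bellman c w i \<longleftrightarrow> mu_lhs c w i \<le> 1"
    using theta_pos[of i] by (auto simp: mult_le_0_iff)
qed

lemma bellman_mu: "c \<in> Costs \<Longrightarrow> bellman c (mu c) i = mu c i"
  using bellman_eq_iff(1) mu_lhs_mu mu_dest unfolding bellman_def by (cases "i = d") auto

lemma bellman_mono:
  assumes "c \<in> Costs" "\<And>j. v j \<le> v' j"
  shows "bellman c v i \<le> bellman c v' i"
proof (cases "i = d")
  case False
  have "expsum c v' i \<le> expsum c v i"
    unfolding expsum_def using assms(2) theta_pos[of i] alpha_nonneg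
    by (intro sum_mono mult_left_mono) (auto simp: mult_left_mono)
  then have "ln (expsum c v' i) \<le> ln (expsum c v i)" using expsum_pos[OF assms(1) False] by simp
  then show ?thesis unfolding bellman_def using False theta_pos[of i] by (simp add: divide_right_mono)
qed (simp add: bellman_def)

lemma bellman_shift_le:
  assumes c: "c \<in> Costs" and "0 \<le> s"
  defines "U \<equiv> \<lambda>j. if j = d then 0 else mu c j + s"
  shows "bellman c U i \<le> U i"
proof (cases "i = d")
  case False
  have "exp (- theta i * s) * expsum c (mu c) i \<le> expsum c U i"
    unfolding expsum_def sum_distrib_left
  proof (rule sum_mono)
    fix l
    have "U (tgt l) \<le> mu c (tgt l) + s" unfolding U_def using mu_dest[OF c] \<open>0 \<le> s\<close> by auto
    then have "theta i * (c $ l + U (tgt l)) \<le> theta i * (c $ l + (mu c (tgt l) + s))"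
      using theta_pos[of i] by (intro mult_left_mono) auto
    then have "exp (- theta i * s) * exp (- theta i * (c $ l + mu c (tgt l)))
        \<le> exp (- theta i * (c $ l + U (tgt l)))"
      by (simp add: algebra_simps flip: exp_add)
    then show "exp (- theta i * s) * (alpha l * exp (- theta i * (c $ l + mu c (tgt l))))
        \<le> alpha l * exp (- theta i * (c $ l + U (tgt l)))"
      using alpha_nonneg[of l] by (simp add: mult_left_mono algebra_simps)
  qed
  then have "ln (exp (- theta i * s) * expsum c (mu c) i) \<le> ln (expsum c U i)"
    using expsum_pos[OF c False] by (subst ln_le_cancel_iff) auto
  then have "- theta i * s + ln (expsum c (mu c) i) \<le> ln (expsum c U i)"
    by (simp only: ln_mult_pos[OF exp_gt_zero expsum_pos[OF c False]] ln_exp)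
  then have "bellman c U i \<le> s + bellman c (mu c) i"
    unfolding bellman_def using False theta_pos[of i] by (simp add: field_simps)
  then show ?thesis using bellman_mu[OF c] False unfolding U_def by simp
qed (simp add: bellman_def U_def)

lemma bellman_tendsto:
  assumes "c \<in> Costs" and "\<And>j. (\<lambda>k. v k j) \<longlonglongrightarrow> L j"
  shows "(\<lambda>k. bellman c (v k) i) \<longlonglongrightarrow> bellman c L i"
proof (cases "i = d")
  case False
  have "(\<lambda>k. expsum c (v k) i) \<longlonglongrightarrow> expsum c L i"
    unfolding expsum_def by (intro tendsto_intros assms(2))
  then show ?thesis unfolding bellman_def
    using False expsum_pos[OF assms(1) False, of c L] theta_pos[of i] by (auto intro!: tendsto_intros)
qed (simp add: bellman_def)

text \<open>Comparison principle: iterating the monotone operator \<open>bellman c\<close> from a subsolution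
  gives an increasing sequence, bounded by a shifted copy of \<open>mu c\<close>; its limit is a solution
  and hence equal to \<open>mu c\<close>.\<close>

lemma subsolution_le_mu:
  assumes c: "c \<in> Costs" and "w d = 0" and sub: "\<And>i. i \<noteq> d \<Longrightarrow> mu_lhs c w i \<le> 1"
  shows "w i \<le> mu c i"
proof -
  define s where "s = (\<Sum>j\<in>UNIV. \<bar>w j - mu c j\<bar>)"
  have "0 \<le> s" unfolding s_def by (simp add: sum_nonneg)
  define U where "U = (\<lambda>j. if j = d then 0 else mu c j + s)"
  have dev: "\<bar>w j - mu c j\<bar> \<le> s" for j unfolding s_def by (rule member_le_sum) auto
  have w_le_U: "w j \<le> U j" for j using dev[of j] \<open>w d = 0\<close> unfolding U_def by (simp add: abs_le_iff)
  have U_super: "bellman c U j \<le> U j" for j unfolding U_def by (rule bellman_shift_le[OF c \<open>0 \<le> s\<close>])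
  have w_sub: "w j \<le> bellman c w j" for j
    using bellman_eq_iff(2)[OF c] sub \<open>w d = 0\<close> unfolding bellman_def by (cases "j = d") auto
  define v where "v = (\<lambda>k. (bellman c ^^ k) w)"
  have v_Suc: "v (Suc k) = bellman c (v k)" for k unfolding v_def by simp
  have bounds: "(\<forall>j. v k j \<le> v (Suc k) j) \<and> (\<forall>j. v k j \<le> U j)" for k
  proof (induction k)
    case 0 show ?case using w_sub w_le_U by (simp add: v_def)
  next
    case (Suc k)
    have "bellman c (v k) j \<le> bellman c (bellman c (v k)) j" for j
      using Suc by (intro bellman_mono[OF c]) (simp add: v_Suc)
    moreover have "bellman c (v k) j \<le> U j" for j
      using Suc order_trans[OF bellman_mono[OF c] U_super] by simp
    ultimately show ?case by (simp add: v_Suc)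
  qed
  have inc: "incseq (\<lambda>k. v k j)" for j using bounds by (intro incseq_SucI) blast
  define L where "L = (\<lambda>j. Sup (range (\<lambda>k. v k j)))"
  have lim: "(\<lambda>k. v k j) \<longlonglongrightarrow> L j" for j
    unfolding L_def using bounds by (intro LIMSEQ_incseq_SUP inc bdd_aboveI2) blast
  have "(\<lambda>k. v (Suc k) j) \<longlonglongrightarrow> bellman c L j" for j
    unfolding v_Suc by (rule bellman_tendsto[OF c lim])
  then have fixed: "bellman c L j = L j" for j by (rule LIMSEQ_unique[OF _ LIMSEQ_Suc[OF lim]])
  have "L d = 0" using fixed[of d] by (simp add: bellman_def)
  moreover have "mu_lhs c L j = 1" if "j \<noteq> d" for j
    using bellman_eq_iff(1)[OF c that, of L] fixed[of j] by simp
  ultimately have "mu_eqs src tgt alpha theta d c L" unfolding mu_eqs_def mu_lhs_def by blast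
  then have "L = mu c" by (rule mu_unique[OF c])
  moreover have "w i \<le> L i" using incseq_le[OF inc lim, of 0] by (simp add: v_def)
  ultimately show ?thesis by simp
qed

lemma mu_concave_on:
  assumes "convex S" "S \<subseteq> Costs"
  shows "concave_on S (\<lambda>c. mu c i)"
  unfolding concave_on_iff
proof (intro conjI ballI allI impI)
  fix c1 c2 and u v :: real
  assume c12: "c1 \<in> S" "c2 \<in> S" and uv: "0 \<le> u" "0 \<le> v" "u + v = 1"
  define c where "c = u *\<^sub>R c1 + v *\<^sub>R c2"
  have "c \<in> S" unfolding c_def using assms(1) c12 uv by (rule convexD)
  then have in_Costs: "c1 \<in> Costs" "c2 \<in> Costs" "c \<in> Costs" using c12 assms(2) by auto
  define w where "w = (\<lambda>j. u * mu c1 j + v * mu c2 j)"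
  have sub: "mu_lhs c w j \<le> 1" if "j \<noteq> d" for j
  proof -
    have "mu_lhs c w j \<le> (\<Sum>l\<in>{l. src l = j}. alpha l *
        (u * exp (- theta j * (c1 $ l + mu c1 (tgt l) - mu c1 j))
         + v * exp (- theta j * (c2 $ l + mu c2 (tgt l) - mu c2 j))))"
      unfolding mu_lhs_def
    proof (intro sum_mono mult_left_mono alpha_nonneg)
      fix l
      define a1 a2 where "a1 = - theta j * (c1 $ l + mu c1 (tgt l) - mu c1 j)"
        and "a2 = - theta j * (c2 $ l + mu c2 (tgt l) - mu c2 j)"
      have u_eq: "u = 1 - v" using uv by simp
      have "- theta j * (c $ l + w (tgt l) - w j) = (1 - v) * a1 + v * a2"
        unfolding c_def w_def a1_def a2_def u_eq by (simp add: algebra_simps)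
      then show "exp (- theta j * (c $ l + w (tgt l) - w j)) \<le> u * exp a1 + v * exp a2"
        using convex_onD[OF exp_convex, of v a1 a2] uv by (simp add: u_eq)
    qed
    also have "\<dots> = u * mu_lhs c1 (mu c1) j + v * mu_lhs c2 (mu c2) j"
      unfolding mu_lhs_def by (simp add: sum.distrib sum_distrib_left algebra_simps)
    also have "\<dots> = 1" using mu_lhs_mu in_Costs that uv by simp
    finally show ?thesis .
  qed
  have "w d = 0" using mu_dest in_Costs by (simp add: w_def)
  then have "w i \<le> mu c i" by (rule subsolution_le_mu[OF in_Costs(3) _ sub])
  then show "u * mu c1 i + v * mu c2 i \<le> mu (u *\<^sub>R c1 + v *\<^sub>R c2) i" unfolding w_def c_def .
qed (fact assms(1))

end

section \<open>Differentiability of the expected minimum costs\<close>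

lemma sum_over_fibres:
  fixes f :: "'l::finite \<Rightarrow> 'n::finite"
  shows "(\<Sum>i\<in>UNIV. \<Sum>l\<in>{l. f l = i}. h l) = (\<Sum>l\<in>UNIV. h l)"
  using sum.group[of UNIV UNIV f h] by simp

lemma abs_exp_sub_one_sub_le:
  fixes u :: real
  assumes "\<bar>u\<bar> \<le> 1"
  shows "\<bar>exp u - 1 - u\<bar> \<le> u\<^sup>2"
proof -
  have "exp u \<le> 1 + u + u\<^sup>2"
  proof (cases "0 \<le> u")
    case False
    define v where "v = - u"
    have v: "0 < v" "v \<le> 1" using False assms unfolding v_def by auto
    have "exp u = 1 / exp v" unfolding v_def by (simp add: exp_minus inverse_eq_divide)
    also have "\<dots> \<le> 1 / (1 + v)" using exp_ge_add_one_self[of v] v by (intro divide_left_mono) auto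
    also have "\<dots> \<le> 1 - v + v\<^sup>2"
    proof -
      have "1 \<le> (1 + v) * (1 - v + v\<^sup>2)" using v by (simp add: algebra_simps power2_eq_square)
      then show ?thesis using v by (simp add: divide_le_eq mult.commute)
    qed
    finally show ?thesis unfolding v_def by simp
  qed (use exp_bound[of u] assms in simp)
  then show ?thesis unfolding abs_le_iff using exp_ge_add_one_self[of u] zero_le_power2[of u] by linarith
qed

lemma weighted_exp_moment_bound:
  fixes p a :: "'a \<Rightarrow> real"
  assumes p_nonneg: "\<And>l. l \<in> L \<Longrightarrow> 0 \<le> p l" and p_sum: "(\<Sum>l\<in>L. p l) = 1"
    and exp_sum: "(\<Sum>l\<in>L. p l * exp (- t * a l)) = 1"
    and "0 < t" and a_bound: "\<And>l. l \<in> L \<Longrightarrow> \<bar>a l\<bar> \<le> B" and "t * B \<le> 1"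
  shows "\<bar>\<Sum>l\<in>L. p l * a l\<bar> \<le> t * B\<^sup>2"
proof -
  have "(\<Sum>l\<in>L. p l * (exp (- t * a l) - 1 - (- t * a l))) = t * (\<Sum>l\<in>L. p l * a l)"
    using exp_sum p_sum by (simp add: algebra_simps sum_subtractf sum.distrib sum_distrib_left)
  then have "t * \<bar>\<Sum>l\<in>L. p l * a l\<bar> = \<bar>\<Sum>l\<in>L. p l * (exp (- t * a l) - 1 - (- t * a l))\<bar>"
    using \<open>0 < t\<close> by (simp add: abs_mult)
  also have "\<dots> \<le> (\<Sum>l\<in>L. p l * (t * B)\<^sup>2)"
  proof (rule order_trans[OF sum_abs sum_mono])
    fix l assume l: "l \<in> L"
    have u: "\<bar>- t * a l\<bar> \<le> t * B"
      using a_bound[OF l] \<open>0 < t\<close> by (simp add: abs_mult mult_left_mono)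
    then have "\<bar>exp (- t * a l) - 1 - (- t * a l)\<bar> \<le> (- t * a l)\<^sup>2"
      using \<open>t * B \<le> 1\<close> by (intro abs_exp_sub_one_sub_le) linarith
    also have "\<dots> \<le> (t * B)\<^sup>2"
      using u by (simp add: power2_le_iff_abs_le order_trans[OF abs_ge_zero u])
    finally show "\<bar>p l * (exp (- t * a l) - 1 - (- t * a l))\<bar> \<le> p l * (t * B)\<^sup>2"
      using p_nonneg[OF l] by (simp add: abs_mult mult_left_mono)
  qed
  also have "\<dots> = t * (t * B\<^sup>2)" using p_sum by (simp add: power2_eq_square flip: sum_distrib_right)
  finally show ?thesis using \<open>0 < t\<close> by simp
qed

context ngev
begin

definition link_prob :: "real ^ 'l \<Rightarrow> 'l \<Rightarrow> real" where
  "link_prob c = ngev_prob src tgt alpha theta (mu c) c"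

definition link_flow :: "real ^ 'l \<Rightarrow> real ^ 'l" where
  "link_flow c = ngev_flow src tgt alpha theta d q c"

definition exit_flow :: "real ^ 'l \<Rightarrow> 'n \<Rightarrow> real" where
  "exit_flow c i = (if i = d then 0 else q i + (\<Sum>h\<in>{h. tgt h = i}. link_flow c $ h))"

definition mu_dot_qtilde :: "'n set \<Rightarrow> real ^ 'l \<Rightarrow> real" where
  "mu_dot_qtilde Orig c = (\<Sum>i\<in>UNIV. mu c i * qtilde Orig q d i)"

definition mu_remainder :: "real ^ 'l \<Rightarrow> real ^ 'l \<Rightarrow> 'n \<Rightarrow> real" where
  "mu_remainder c c' i = (mu c' i - mu c i) -
     (\<Sum>l\<in>{l. src l = i}. link_prob c l * ((c' - c) $ l + (mu c' (tgt l) - mu c (tgt l))))"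

lemma link_flow_eq:
  assumes "c \<in> Costs"
  shows "link_flow c $ l = exit_flow c (src l) * link_prob c l"
proof -
  have "flow_eqs src tgt (link_prob c) d q (link_flow c)"
    unfolding link_flow_def ngev_flow_def link_prob_def by (rule theI'[OF flow_wellposed[OF assms]])
  then show ?thesis unfolding flow_eqs_def exit_flow_def by simp
qed

lemma link_prob_eq:
  assumes c: "c \<in> Costs" and "src l \<noteq> d"
  shows "link_prob c l = alpha l * exp (- theta (src l) * (c $ l + mu c (tgt l) - mu c (src l)))"
proof -
  have "exp (theta (src l) * mu c (src l)) * expsum c (mu c) (src l) = 1"
    using mu_lhs_mu[OF assms] by (simp add: mu_lhs_eq)
  then have "expsum c (mu c) (src l) = exp (- theta (src l) * mu c (src l))"
    by (simp add: exp_minus field_simps)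
  then have "link_prob c l = alpha l * (exp (- theta (src l) * (c $ l + mu c (tgt l)))
      / exp (- theta (src l) * mu c (src l)))"
    unfolding link_prob_def ngev_prob_def expsum_def[symmetric] by simp
  also have "\<dots> = alpha l * exp (- theta (src l) * (c $ l + mu c (tgt l) - mu c (src l)))"
    by (simp only: exp_diff[symmetric]) (simp add: algebra_simps)
  finally show ?thesis .
qed

lemma link_prob_nonneg: "c \<in> Costs \<Longrightarrow> src l \<noteq> d \<Longrightarrow> 0 \<le> link_prob c l"
  using link_prob_eq alpha_nonneg by simp

lemma link_prob_sum:
  assumes "c \<in> Costs" "i \<noteq> d"
  shows "(\<Sum>l\<in>{l. src l = i}. link_prob c l) = 1"
proof -
  have "(\<Sum>l\<in>{l. src l = i}. link_prob c l) = mu_lhs c (mu c) i"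
    unfolding mu_lhs_def using assms by (intro sum.cong) (auto simp: link_prob_eq)
  then show ?thesis using mu_lhs_mu[OF assms] by simp
qed

text \<open>The linear terms cancel by flow conservation.\<close>

lemma mu_dot_qtilde_remainder:
  assumes c: "c \<in> Costs" and c': "c' \<in> Costs"
  shows "mu_dot_qtilde Orig c' - mu_dot_qtilde Orig c - link_flow c \<bullet> (c' - c)
       = (\<Sum>i\<in>UNIV. exit_flow c i * mu_remainder c c' i)"
proof -
  define \<delta> where "\<delta> = (\<lambda>j. mu c' j - mu c j)"
  define inflow where "inflow = (\<lambda>j. \<Sum>h\<in>{h. tgt h = j}. link_flow c $ h)"
  have "\<delta> d = 0" unfolding \<delta>_def using mu_dest c c' by simp
  have "mu_dot_qtilde Orig c' - mu_dot_qtilde Orig c = (\<Sum>i\<in>UNIV. \<delta> i * qtilde Orig q d i)"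
    unfolding mu_dot_qtilde_def \<delta>_def by (simp add: sum_subtractf left_diff_distrib)
  also have "\<dots> = (\<Sum>i\<in>UNIV. q i * \<delta> i)"
    using \<open>\<delta> d = 0\<close> by (intro sum.cong) (auto simp: qtilde_def)
  finally have mu_q: "mu_dot_qtilde Orig c' - mu_dot_qtilde Orig c = (\<Sum>i\<in>UNIV. q i * \<delta> i)" .
  have "(\<Sum>i\<in>UNIV. exit_flow c i * mu_remainder c c' i)
      = (\<Sum>i\<in>UNIV. exit_flow c i * \<delta> i)
        - (\<Sum>i\<in>UNIV. exit_flow c i * (\<Sum>l\<in>{l. src l = i}. link_prob c l * ((c' - c) $ l + \<delta> (tgt l))))"
    unfolding mu_remainder_def \<delta>_def by (simp add: right_diff_distrib sum_subtractf)
  also have "(\<Sum>i\<in>UNIV. exit_flow c i * \<delta> i) = (\<Sum>i\<in>UNIV. (q i + inflow i) * \<delta> i)"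
    using \<open>\<delta> d = 0\<close> unfolding exit_flow_def inflow_def by (auto intro: sum.cong)
  also have "(\<Sum>i\<in>UNIV. exit_flow c i * (\<Sum>l\<in>{l. src l = i}. link_prob c l * ((c' - c) $ l + \<delta> (tgt l))))
      = (\<Sum>l\<in>UNIV. link_flow c $ l * ((c' - c) $ l + \<delta> (tgt l)))"
    unfolding sum_distrib_left
    by (subst sum_over_fibres[where f = src, symmetric]) (auto simp: link_flow_eq[OF c] intro!: sum.cong)
  also have "\<dots> = link_flow c \<bullet> (c' - c) + (\<Sum>l\<in>UNIV. link_flow c $ l * \<delta> (tgt l))"
    unfolding inner_vec_def by (simp add: distrib_left sum.distrib)
  also have "(\<Sum>l\<in>UNIV. link_flow c $ l * \<delta> (tgt l)) = (\<Sum>j\<in>UNIV. inflow j * \<delta> j)"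
    unfolding inflow_def sum_distrib_right
    by (subst sum_over_fibres[where f = tgt, symmetric]) (auto intro!: sum.cong)
  finally show ?thesis unfolding mu_q by (simp add: distrib_right sum.distrib)
qed

lemma mu_remainder_bound:
  assumes c: "c \<in> Costs" and c': "c' \<in> Costs" and i: "i \<noteq> d"
    and "theta i * B \<le> 1"
    and dev: "\<And>l. src l = i \<Longrightarrow>
      \<bar>(c' - c) $ l + (mu c' (tgt l) - mu c (tgt l)) - (mu c' i - mu c i)\<bar> \<le> B"
  shows "\<bar>mu_remainder c c' i\<bar> \<le> theta i * B\<^sup>2"
proof -
  define a where "a = (\<lambda>l. (c' - c) $ l + (mu c' (tgt l) - mu c (tgt l)) - (mu c' i - mu c i))"
  let ?L = "{l. src l = i}"
  have p_sum: "(\<Sum>l\<in>?L. link_prob c l) = 1" by (rule link_prob_sum[OF c i])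
  have "link_prob c l * exp (- theta i * a l)
      = alpha l * exp (- theta i * (c' $ l + mu c' (tgt l) - mu c' i))" if "l \<in> ?L" for l
  proof -
    have "exp (- theta i * (c $ l + mu c (tgt l) - mu c i)) * exp (- theta i * a l)
        = exp (- theta i * (c' $ l + mu c' (tgt l) - mu c' i))"
      unfolding a_def exp_add[symmetric] by (simp add: algebra_simps)
    then show ?thesis using link_prob_eq[OF c, of l] that i by simp
  qed
  \<comment> \<open>The equation of \<open>mu c'\<close> at \<open>i\<close>, weighted by the probabilities at \<open>c\<close>:\<close>
  then have "(\<Sum>l\<in>?L. link_prob c l * exp (- theta i * a l)) = mu_lhs c' (mu c') i"
    unfolding mu_lhs_def by (rule sum.cong[OF refl])
  then have "\<bar>\<Sum>l\<in>?L. link_prob c l * a l\<bar> \<le> theta i * B\<^sup>2"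
    using link_prob_nonneg[OF c] i p_sum mu_lhs_mu[OF c' i] theta_pos[of i] dev \<open>theta i * B \<le> 1\<close>
    by (intro weighted_exp_moment_bound) (auto simp: a_def)
  moreover have "(\<Sum>l\<in>?L. link_prob c l * a l) = - mu_remainder c c' i"
    unfolding a_def mu_remainder_def
    by (simp add: sum_subtractf right_diff_distrib p_sum flip: sum_distrib_right)
  ultimately show ?thesis by simp
qed

end

lemma concave_on_cong_on:
  assumes "concave_on S f" and fg: "\<And>x. x \<in> S \<Longrightarrow> f x = g x"
  shows "concave_on S g"
  unfolding concave_on_iff
proof (intro conjI ballI allI impI)
  show S: "convex S" using assms(1) by (rule concave_on_imp_convex)
  fix x y and u v :: real
  assume xy: "x \<in> S" "y \<in> S" and uv: "0 \<le> u" "0 \<le> v" "u + v = 1"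
  have "u *\<^sub>R x + v *\<^sub>R y \<in> S" using S xy uv by (rule convexD)
  then show "u * g x + v * g y \<le> g (u *\<^sub>R x + v *\<^sub>R y)"
    using assms(1) xy uv unfolding concave_on_iff by (simp flip: fg)
qed

context ngev
begin

lemma mu_dot_qtilde_concave_on:
  assumes "convex S" "S \<subseteq> Costs"
  shows "concave_on S (mu_dot_qtilde Orig)"
proof (rule concave_on_cong_on)
  show "concave_on S (\<lambda>c. \<Sum>i\<in>UNIV. (if i = d then 0 else q i) * mu c i)"
    using assms by (intro concave_on_sum_fun concave_on_cmul mu_concave_on) (auto intro: q_nonneg)
  show "(\<Sum>i\<in>UNIV. (if i = d then 0 else q i) * mu c i) = mu_dot_qtilde Orig c" if "c \<in> S" for c
    unfolding mu_dot_qtilde_def using mu_dest that assms(2)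
    by (intro sum.cong) (auto simp: qtilde_def)
qed

lemma mu_locally_lipschitz:
  assumes "c \<in> interior Costs"
  obtains r K where "0 < r" "cball c r \<subseteq> Costs" "0 \<le> K"
    "\<And>x y j. x \<in> cball c r \<Longrightarrow> y \<in> cball c r \<Longrightarrow> \<bar>mu x j - mu y j\<bar> \<le> K * norm (x - y)"
proof -
  obtain \<rho> where "0 < \<rho>" "ball c \<rho> \<subseteq> Costs" using assms mem_interior by blast
  define r where "r = \<rho> / 3"
  have "0 < r" and in_ball: "cball c (2 * r) \<subseteq> ball c \<rho>" and in_Costs: "cball c r \<subseteq> Costs"
    using \<open>0 < \<rho>\<close> \<open>ball c \<rho> \<subseteq> Costs\<close> unfolding r_def by (auto simp: subset_eq)
  have "\<exists>K. \<forall>x\<in>cball c r. \<forall>y\<in>cball c r. \<bar>mu x j - mu y j\<bar> \<le> K * norm (x - y)" for j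
  proof -
    have "convex_on (ball c \<rho>) (\<lambda>x. - mu x j)"
      using mu_concave_on[OF convex_ball \<open>ball c \<rho> \<subseteq> Costs\<close>] unfolding concave_on_def .
    from convex_on_locally_lipschitz[OF open_ball this in_ball \<open>0 < r\<close>] obtain K
      where "\<And>x y. x \<in> cball c r \<Longrightarrow> y \<in> cball c r \<Longrightarrow> \<bar>- mu x j - - mu y j\<bar> \<le> K * norm (x - y)"
      by blast
    then show ?thesis by (intro exI[of _ K]) (simp add: abs_minus_commute)
  qed
  then obtain Kj where Kj: "\<And>j x y. x \<in> cball c r \<Longrightarrow> y \<in> cball c r \<Longrightarrow>
      \<bar>mu x j - mu y j\<bar> \<le> Kj j * norm (x - y)"
    by metis
  define K where "K = (\<Sum>j\<in>UNIV. \<bar>Kj j\<bar>)"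
  have "\<bar>mu x j - mu y j\<bar> \<le> K * norm (x - y)" if "x \<in> cball c r" "y \<in> cball c r" for x y j
  proof -
    have "Kj j \<le> K" unfolding K_def using member_le_sum[of j UNIV "\<lambda>j. \<bar>Kj j\<bar>"] by force
    then show ?thesis using Kj[OF that, of j] by (smt (verit) mult_right_mono norm_ge_zero)
  qed
  moreover have "0 \<le> K" unfolding K_def by (simp add: sum_nonneg)
  ultimately show ?thesis using that \<open>0 < r\<close> in_Costs by blast
qed

lemma mu_dot_qtilde_quadratic_remainder:
  assumes "c \<in> interior Costs"
  obtains r M where "0 < r" "\<And>y. norm (y - c) < r \<Longrightarrow>
    \<bar>mu_dot_qtilde Orig y - mu_dot_qtilde Orig c - link_flow c \<bullet> (y - c)\<bar> \<le> M * (norm (y - c))\<^sup>2"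
proof -
  obtain r K where "0 < r" and r: "cball c r \<subseteq> Costs" and "0 \<le> K"
    and lip: "\<And>x y j. x \<in> cball c r \<Longrightarrow> y \<in> cball c r \<Longrightarrow> \<bar>mu x j - mu y j\<bar> \<le> K * norm (x - y)"
    using mu_locally_lipschitz[OF assms] by blast
  define \<Theta> where "\<Theta> = (\<Sum>i\<in>UNIV. theta i)"
  have theta_le: "theta i \<le> \<Theta>" for i
    unfolding \<Theta>_def by (rule member_le_sum) (auto intro: less_imp_le theta_pos)
  have "0 < \<Theta>" using theta_le[of d] theta_pos[of d] by linarith
  define A where "A = 1 + 2 * K"
  have "1 \<le> A" unfolding A_def using \<open>0 \<le> K\<close> by simp
  define W where "W = (\<Sum>i\<in>UNIV. \<bar>exit_flow c i\<bar> * theta i)"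
  define r' where "r' = min r (1 / (\<Theta> * A))"
  have "0 < r'" unfolding r'_def using \<open>0 < r\<close> \<open>0 < \<Theta>\<close> \<open>1 \<le> A\<close> by simp
  moreover have "\<bar>mu_dot_qtilde Orig y - mu_dot_qtilde Orig c - link_flow c \<bullet> (y - c)\<bar>
      \<le> (W * A\<^sup>2) * (norm (y - c))\<^sup>2" if y: "norm (y - c) < r'" for y
  proof -
    define n where "n = norm (y - c)"
    have y_in: "y \<in> cball c r" and c_in: "c \<in> cball c r"
      using y \<open>0 < r\<close> unfolding r'_def by (auto simp: dist_norm norm_minus_commute)
    have "n * A \<le> 1 / \<Theta>"
      using y \<open>0 < \<Theta>\<close> \<open>1 \<le> A\<close> unfolding n_def r'_def by (simp add: field_simps)
    have "\<bar>exit_flow c i * mu_remainder c y i\<bar> \<le> \<bar>exit_flow c i\<bar> * theta i * (A * n)\<^sup>2" for i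
    proof (cases "i = d")
      case False
      have "theta i * (A * n) \<le> \<Theta> * (A * n)"
        using theta_le[of i] \<open>1 \<le> A\<close> by (intro mult_right_mono) (auto simp: n_def)
      also have "\<dots> \<le> 1" using \<open>n * A \<le> 1 / \<Theta>\<close> \<open>0 < \<Theta>\<close> by (simp add: field_simps)
      finally have "theta i * (A * n) \<le> 1" .
      moreover have "\<bar>(y - c) $ l + (mu y (tgt l) - mu c (tgt l)) - (mu y i - mu c i)\<bar> \<le> A * n" for l
        using component_le_norm_cart[of "y - c" l] lip[OF y_in c_in, of "tgt l"] lip[OF y_in c_in, of i]
        unfolding A_def n_def by (simp add: abs_le_iff algebra_simps)
      ultimately have "\<bar>mu_remainder c y i\<bar> \<le> theta i * (A * n)\<^sup>2"
        using \<open>1 \<le> A\<close> r y_in c_in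
        by (intro mu_remainder_bound False) (auto simp: n_def)
      then show ?thesis by (simp add: abs_mult mult_left_mono mult.assoc)
    qed (simp add: exit_flow_def)
    then have "\<bar>\<Sum>i\<in>UNIV. exit_flow c i * mu_remainder c y i\<bar> \<le> W * (A * n)\<^sup>2"
      unfolding W_def sum_distrib_right by (intro order_trans[OF sum_abs sum_mono])
    moreover have "c \<in> Costs" "y \<in> Costs" using r y_in c_in by auto
    ultimately show ?thesis
      using mu_dot_qtilde_remainder[of c y Orig] by (simp add: n_def power_mult_distrib mult_ac)
  qed
  ultimately show ?thesis using that by blast
qed

lemma mu_dot_qtilde_has_derivative:
  assumes "c \<in> interior Costs"
  shows "(mu_dot_qtilde Orig has_derivative (\<lambda>h. link_flow c \<bullet> h)) (at c)"
proof -
  obtain r M where "0 < r" "\<And>y. norm (y - c) < r \<Longrightarrow>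
    \<bar>mu_dot_qtilde Orig y - mu_dot_qtilde Orig c - link_flow c \<bullet> (y - c)\<bar> \<le> M * (norm (y - c))\<^sup>2"
    using mu_dot_qtilde_quadratic_remainder[OF assms] by blast
  then show ?thesis
    by (intro has_derivative_if_quadratic_remainder bounded_linear_inner_right)
qed

end

section \<open>The dual objective\<close>

locale ngev_network = cost_map cm
  for cm :: "real ^ 'l::finite \<Rightarrow> real ^ 'l" +
  fixes src tgt :: "'l \<Rightarrow> 'n::finite" and alpha :: "'n \<Rightarrow> 'l \<Rightarrow> real"
    and theta :: "'n \<Rightarrow> 'n \<Rightarrow> real" and q :: "'n \<Rightarrow> 'n \<Rightarrow> real" and D :: "'n set"
  assumes ngev: "\<And>d. d \<in> D \<Longrightarrow> ngev src tgt (alpha d) (theta d) d (q d) (cm ` nonneg_orthant)"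
begin

abbreviation Z where "Z Orig \<equiv> Z_FD_D src tgt alpha theta Orig D q cm"

abbreviation gradient where "gradient c \<equiv> total_flow src tgt alpha theta D q c - cinv cm c"

lemma Z_eq:
  "Z Orig c = - Cstar cm c + (\<Sum>d\<in>D. ngev.mu_dot_qtilde src tgt (alpha d) (theta d) d (q d) Orig c)"
  unfolding Z_FD_D_def using ngev.mu_dot_qtilde_def[OF ngev] by simp

lemma total_flow_eq:
  "total_flow src tgt alpha theta D q c = (\<Sum>d\<in>D. ngev.link_flow src tgt (alpha d) (theta d) d (q d) c)"
  unfolding total_flow_def using ngev.link_flow_def[OF ngev] by simp

lemma Z_concave_on:
  assumes "convex S" "S \<subseteq> cm ` nonneg_orthant"
  shows "concave_on S (Z Orig)"
proof -
  have "concave_on S (\<lambda>c. - Cstar cm c)"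
    using convex_on_Cstar[OF assms] by (simp add: concave_on_def)
  moreover have "concave_on S (\<lambda>c. \<Sum>d\<in>D. ngev.mu_dot_qtilde src tgt (alpha d) (theta d) d (q d) Orig c)"
    using assms ngev.mu_dot_qtilde_concave_on[OF ngev] by (intro concave_on_sum_fun) auto
  ultimately show ?thesis unfolding Z_eq by (rule concave_on_add)
qed

lemma Z_has_derivative:
  assumes "c \<in> interior (cm ` nonneg_orthant)"
  shows "(Z Orig has_derivative (\<lambda>h. gradient c \<bullet> h)) (at c)"
proof -
  have "(Z Orig has_derivative (\<lambda>h. - (cinv cm c \<bullet> h)
      + (\<Sum>d\<in>D. ngev.link_flow src tgt (alpha d) (theta d) d (q d) c \<bullet> h))) (at c)"
    unfolding Z_eq[abs_def] using assms
    by (intro has_derivative_add has_derivative_minus Cstar_has_derivative has_derivative_sum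
        ngev.mu_dot_qtilde_has_derivative[OF ngev])
  then show ?thesis by (simp add: total_flow_eq inner_diff_left inner_sum_left)
qed

lemma gradient_continuous_on: "continuous_on (interior (cm ` nonneg_orthant)) gradient"
proof (rule continuous_at_imp_continuous_on, rule ballI)
  fix c assume "c \<in> interior (cm ` nonneg_orthant)"
  then obtain r where "0 < r" and r: "ball c r \<subseteq> cm ` nonneg_orthant" using mem_interior by blast
  then have "ball c r \<subseteq> interior (cm ` nonneg_orthant)" by (simp add: interior_maximal)
  \<comment> \<open>The gradient does not depend on the set of origins, so any one will do.\<close>
  then have "((\<lambda>c. - Z {} c) has_derivative (\<lambda>h. (- gradient x) \<bullet> h)) (at x)" if "x \<in> ball c r" for x
  proof -
    have "((\<lambda>c. - Z {} c) has_derivative (\<lambda>h. - (gradient x \<bullet> h))) (at x)"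
      using that \<open>ball c r \<subseteq> interior (cm ` nonneg_orthant)\<close>
      by (intro has_derivative_minus Z_has_derivative) auto
    moreover have "(\<lambda>h. - (gradient x \<bullet> h)) = (\<lambda>h. (- gradient x) \<bullet> h)"
      by (simp add: fun_eq_iff inner_diff_left)
    ultimately show ?thesis by (simp only:)
  qed
  moreover have "convex_on (ball c r) (\<lambda>c. - Z {} c)"
    using Z_concave_on[OF convex_ball r] by (simp add: concave_on_def)
  ultimately have "isCont (\<lambda>c. - gradient c) c"
    using \<open>0 < r\<close> by (intro convex_on_gradient_continuous[OF open_ball]) auto
  then show "isCont gradient c" using continuous_minus by fastforce
qed

end

theorem lemma1:
  fixes src tgt :: "'l::finite \<Rightarrow> 'n::finite"
    and Orig D :: "'n set"
    and q :: "'n \<Rightarrow> 'n \<Rightarrow> real"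
    and theta :: "'n \<Rightarrow> 'n \<Rightarrow> real"
    and alpha :: "'n \<Rightarrow> 'l \<Rightarrow> real"
    and cm :: "real ^ 'l \<Rightarrow> real ^ 'l"
  assumes simple_graph: "inj (\<lambda>l. (src l, tgt l))"
    and q_nonneg: "\<forall>d\<in>D. \<forall>i. 0 \<le> q d i"
    and theta_pos: "\<forall>d\<in>D. \<forall>i. 0 < theta d i"
    and alpha_nonneg: "\<forall>d\<in>D. \<forall>l. 0 \<le> alpha d l"
    and alpha_sum: "\<forall>d\<in>D. \<forall>j. (\<Sum>l\<in>{l. tgt l = j}. alpha d l) = 1"
    and mu_wellposed: "\<forall>d\<in>D. \<forall>c\<in>cm ` nonneg_orthant.
           \<exists>!mu. mu_eqs src tgt (alpha d) (theta d) d c mu"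
    and flow_wellposed: "\<forall>d\<in>D. \<forall>t\<in>cm ` nonneg_orthant.
           \<exists>!x. flow_eqs src tgt
                  (ngev_prob src tgt (alpha d) (theta d) (mu_of src tgt (alpha d) (theta d) d t) t)
                  d (q d) x"
    and cm_cont: "continuous_on nonneg_orthant cm"
    and cm_range: "cm ` nonneg_orthant \<subseteq> nonneg_orthant"
    and cm_sym_jacobian: "\<forall>X\<in>nonneg_orthant. \<exists>J.
           (cm has_derivative J) (at X within nonneg_orthant) \<and> (\<forall>u v. J u \<bullet> v = u \<bullet> J v)"
    and cm_strict_mono: "\<forall>X\<in>nonneg_orthant. \<forall>Y\<in>nonneg_orthant.
           X \<noteq> Y \<longrightarrow> 0 < (cm X - cm Y) \<bullet> (X - Y)"
  shows "(\<forall>S. convex S \<and> S \<subseteq> cm ` nonneg_orthant \<longrightarrow>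
            concave_on S (Z_FD_D src tgt alpha theta Orig D q cm))
       \<and> continuous_on (interior (cm ` nonneg_orthant))
            (\<lambda>c. total_flow src tgt alpha theta D q c - cinv cm c)
       \<and> (\<forall>c\<in>interior (cm ` nonneg_orthant).
            (Z_FD_D src tgt alpha theta Orig D q cm has_derivative
               (\<lambda>h. (total_flow src tgt alpha theta D q c - cinv cm c) \<bullet> h)) (at c))"
proof -
  have ngev: "ngev src tgt (alpha d) (theta d) d (q d) (cm ` nonneg_orthant)" if "d \<in> D" for d
    by (intro ngev.intro)
      (use that theta_pos alpha_nonneg q_nonneg mu_wellposed flow_wellposed in blast)+
  interpret ngev_network cm src tgt alpha theta q D
    by (intro ngev_network.intro cost_map.intro ngev_network_axioms.intro
        cm_cont cm_sym_jacobian cm_strict_mono ngev)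
  show ?thesis using Z_concave_on gradient_continuous_on Z_has_derivative by blast
qed

end
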